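(* Let $n,k\ge1$ be integers and $\lambda>0$. Let $E$ be the event that each row $\{1,\dots\}\ni i\le n$ of $\Pi^{(\lambda)}_{nk,n}$ contains at least $k$ points, i.e. $\mathrm{card}\big(\Pi^{(\lambda)}_{nk,n}\cap([0,nk]\times\{i\})\big)\ge k$ for all $1\le i\le n$. Then $S_{k;n}$ and $\Pi^{(\lambda)}$ can be defined on a common probability space so that almost surely $$\mathcal L_\le(S_{k;n})\le\mathcal L_\le(\Pi^{(\lambda)}_{nk,n})+nk\,(1-\mathbf 1_E).$$
   Context: A $k$-multiset permutation of size $n$ is a word $s=(s(1),\dots,s(kn))$ with letters in $\{1,\dots,n\}$ in which each letter appears exactly $k$ times, identified with the point set $\{(i,s(i)):1\le i\le kn\}$; $S_{k;n}$ is a uniformly random one. For $\lambda>0$, $(\Pi_i^{(\lambda)})_{i\ge1}$ are independent homogeneous Poisson point processes of intensity $\lambda$ on $(0,\infty)$, $\Pi^{(\lambda)}=\bigcup_i\Pi_i^{(\lambda)}\times\{i\}$, and $\Pi^{(\lambda)}_{x,t}=\Pi^{(\lambda)}\cap([0,x]\times\{1,\dots,t\})$. $(a,b)\preccurlyeq(a',b')$ iff $a<a'$ and $b\le b'$; $\mathcal L_\le(\mathcal P)$ is the maximal length of a chain $P_1\preccurlyeq\dots\preccurlyeq P_L$ in a finite point set $\mathcal P$. *)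

theory Defs
  imports "HOL-Probability.Probability"
begin

definition multiset_perms :: "nat \<Rightarrow> nat \<Rightarrow> nat list set" where
  "multiset_perms n k =
     {s. length s = k * n \<and> set s \<subseteq> {1..n} \<and> (\<forall>a\<in>{1..n}. count (mset s) a = k)}"

definition word_points :: "nat list \<Rightarrow> (real \<times> nat) set" where
  "word_points s = {(real (j + 1), s ! j) | j. j < length s}"

definition chain_prec :: "real \<times> nat \<Rightarrow> real \<times> nat \<Rightarrow> bool" where
  "chain_prec p q \<longleftrightarrow> fst p < fst q \<and> snd p \<le> snd q"

definition max_chain_len :: "(real \<times> nat) set \<Rightarrow> nat" where
  "max_chain_len P = Max {length c | c. set c \<subseteq> P \<and> sorted_wrt chain_prec c}"

text \<open>Poisson point process via arrival times: row i has points
  T_i(m) = sum_{j<=m} G(i,j), m = 0,1,2,..., where the G(i,j) are iid Exp(lambda)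
  inter-arrival times.  ppp_window G x t is the restriction of the process to
  [0,x] x {1..t}.\<close>
definition ppp_window :: "(nat \<times> nat \<Rightarrow> real) \<Rightarrow> real \<Rightarrow> nat \<Rightarrow> (real \<times> nat) set" where
  "ppp_window G x t =
     {(a, i). 1 \<le> i \<and> i \<le> t \<and> 0 \<le> a \<and> a \<le> x \<and> (\<exists>m. a = (\<Sum>j\<le>m. G (i, j)))}"

end

theory Submission
  imports Defs
begin

text \<open>By
  memorylessness, the gaps seen from the first point of the process are again iid exponential, so by
  induction the rows of the successive points in \<open>(0, x]\<close> spell any given word of length \<open>m\<close> over
  \<open>{1..n}\<close> with probability \<open>exp (- n lam x) (lam x)\<^sup>m / m!\<close>, whatever the word. Hence, given its
  letter counts, the arrival word is uniform. If each letter occurs at least \<open>k\<close> times, keep \<open>k\<close>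
  uniformly chosen occurrences of each letter: relabelling the kept letters shows that every multiset
  permutation arises from equally many pairs of a word and a choice, so the kept subword is uniform.
  Its points form a time-ordered subset of the Poisson window, so its chains are chains of the window.
  If some row has fewer than \<open>k\<close> points, the bound \<open>n k\<close> on the length of a chain is trivial.\<close>

lemma distinct_if_sorted_wrt_fst:
  "sorted_wrt (\<lambda>p q. fst p < (fst q :: 'a :: order)) xs \<Longrightarrow> distinct xs"
  by (induction xs) auto

lemma length_filter_snd_eq_count: "length (filter (\<lambda>p. snd p = i) xs) = count (mset (map snd xs)) i"
  by (induction xs) auto

lemma length_filter_fst_eq_count: "length (filter (\<lambda>p. fst p = i) xs) = count (mset (map fst xs)) i"
  by (induction xs) auto

section \<open>Longest chains\<close>

definition chain_lengths :: "(real \<times> nat) set \<Rightarrow> nat set" where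
  "chain_lengths P = {length c | c. set c \<subseteq> P \<and> sorted_wrt chain_prec c}"

lemma max_chain_len_eq_Max: "max_chain_len P = Max (chain_lengths P)"
  by (simp add: max_chain_len_def chain_lengths_def)

lemma distinct_if_chain: "sorted_wrt chain_prec c \<Longrightarrow> distinct c"
  by (rule distinct_if_sorted_wrt_fst) (auto elim: sorted_wrt_mono_rel[rotated] simp: chain_prec_def)

lemma length_chain_le_card:
  "finite P \<Longrightarrow> set c \<subseteq> P \<Longrightarrow> sorted_wrt chain_prec c \<Longrightarrow> length c \<le> card P"
  using distinct_if_chain distinct_card card_mono by metis

lemma finite_chain_lengths: "finite P \<Longrightarrow> finite (chain_lengths P)"
  by (rule finite_subset[of _ "{..card P}"]) (auto simp: chain_lengths_def intro: length_chain_le_card)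

lemma chain_lengths_nonempty: "chain_lengths P \<noteq> {}"
  by (auto simp: chain_lengths_def intro!: exI[of _ "[]"])

lemma length_chain_le_max_chain_len:
  "finite P \<Longrightarrow> set c \<subseteq> P \<Longrightarrow> sorted_wrt chain_prec c \<Longrightarrow> length c \<le> max_chain_len P"
  unfolding max_chain_len_eq_Max
  by (rule Max_ge[OF finite_chain_lengths]) (auto simp: chain_lengths_def)

lemma max_chain_len_le_card: "finite P \<Longrightarrow> max_chain_len P \<le> card P"
  unfolding max_chain_len_eq_Max using finite_chain_lengths chain_lengths_nonempty
  by (subst Max_le_iff) (auto simp: chain_lengths_def intro: length_chain_le_card)

lemma max_chain_len_mono:
  assumes "finite P'"
    and "\<And>c. set c \<subseteq> P \<Longrightarrow> sorted_wrt chain_prec c \<Longrightarrow>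
           \<exists>c'. set c' \<subseteq> P' \<and> sorted_wrt chain_prec c' \<and> length c' = length c"
  shows "max_chain_len P \<le> max_chain_len P'"
  unfolding max_chain_len_eq_Max
proof (rule Max_mono)
  show "chain_lengths P \<subseteq> chain_lengths P'"
  proof
    fix m assume "m \<in> chain_lengths P"
    then obtain c where c: "m = length c" "set c \<subseteq> P" "sorted_wrt chain_prec c"
      by (auto simp: chain_lengths_def)
    from assms(2)[OF c(2,3)] obtain c' where
      "set c' \<subseteq> P'" "sorted_wrt chain_prec c'" "length c' = length c" by blast
    then show "m \<in> chain_lengths P'"
      using c(1) unfolding chain_lengths_def by (intro CollectI exI[of _ c']) auto
  qed
qed (use chain_lengths_nonempty finite_chain_lengths[OF assms(1)] in auto)

lemma max_chain_len_subset: "finite P' \<Longrightarrow> P \<subseteq> P' \<Longrightarrow> max_chain_len P \<le> max_chain_len P'"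
  by (rule max_chain_len_mono) auto

lemma word_points_conv_image: "word_points s = (\<lambda>j. (real (j+1), s ! j)) ` {..<length s}"
  by (auto simp: word_points_def)

lemma finite_word_points: "finite (word_points s)"
  by (simp add: word_points_conv_image)

lemma max_chain_len_word_points_le_length: "max_chain_len (word_points s) \<le> length s"
proof -
  have "max_chain_len (word_points s) \<le> card (word_points s)"
    by (rule max_chain_len_le_card[OF finite_word_points])
  also have "\<dots> \<le> length s"
    unfolding word_points_conv_image by (rule order.trans[OF card_image_le]) auto
  finally show ?thesis .
qed

text \<open>Replacing the times of time-ordered points by their ranks \<open>1, 2, \<dots>\<close> preserves chains.\<close>

lemma max_chain_len_word_points_of_sorted:
  assumes xs: "sorted_wrt (\<lambda>p q. fst p < fst q) xs"
  shows "max_chain_len (word_points (map snd xs)) \<le> max_chain_len (set xs)"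
proof (rule max_chain_len_mono)
  fix c assume c: "set c \<subseteq> word_points (map snd xs)" "sorted_wrt chain_prec c"
  define h where "h = (\<lambda>p::real\<times>nat. xs ! (nat \<lfloor>fst p\<rfloor> - 1))"
  have nj: "nat (1 + int j) = Suc j" for j by arith
  have hp: "p \<in> word_points (map snd xs) \<Longrightarrow>
      \<exists>j. j < length xs \<and> p = (real (j+1), snd (xs ! j)) \<and> h p = xs ! j" for p
    by (auto simp: word_points_def h_def nj)
  have "sorted_wrt chain_prec (map h c)"
    unfolding sorted_wrt_map
  proof (rule sorted_wrt_mono_rel[OF _ c(2)])
    fix p q assume pq: "p \<in> set c" "q \<in> set c" "chain_prec p q"
    obtain j where j: "j < length xs" "p = (real (j+1), snd (xs ! j))" "h p = xs ! j"
      using hp pq(1) c(1) by blast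
    obtain j' where j': "j' < length xs" "q = (real (j'+1), snd (xs ! j'))" "h q = xs ! j'"
      using hp pq(2) c(1) by blast
    have "j < j'" using pq(3) j j' by (simp add: chain_prec_def)
    then have "fst (xs ! j) < fst (xs ! j')" using xs j' by (simp add: sorted_wrt_iff_nth_less)
    then show "chain_prec (h p) (h q)" using pq(3) j j' by (simp add: chain_prec_def)
  qed
  moreover have "set (map h c) \<subseteq> set xs" using hp c(1) by fastforce
  ultimately show "\<exists>c'. set c' \<subseteq> set xs \<and> sorted_wrt chain_prec c' \<and> length c' = length c"
    by (intro exI[of _ "map h c"]) auto
qed simp

lemma count_le_max_chain_len:
  assumes xs: "sorted_wrt (\<lambda>p q. fst p < fst q) xs" and P: "finite P" "set xs \<subseteq> P"
  shows "count (mset (map snd xs)) i \<le> max_chain_len P"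
proof -
  have "sorted_wrt (\<lambda>p q. fst p < fst q) (filter (\<lambda>p. snd p = i) xs)"
    using xs by (rule sorted_wrt_filter)
  then have "sorted_wrt chain_prec (filter (\<lambda>p. snd p = i) xs)"
    by (rule sorted_wrt_mono_rel[rotated]) (auto simp: chain_prec_def)
  then have "length (filter (\<lambda>p. snd p = i) xs) \<le> max_chain_len P"
    using P by (intro length_chain_le_max_chain_len) auto
  then show ?thesis by (simp add: length_filter_snd_eq_count)
qed

definition masked :: "'a list \<Rightarrow> bool list \<Rightarrow> 'a list" where
  "masked xs bs = map fst (filter snd (zip xs bs))"

lemma set_masked: "set (masked xs bs) \<subseteq> set xs"
  by (auto simp: masked_def dest: set_zip_leftD)

lemma sorted_wrt_masked: "sorted_wrt R xs \<Longrightarrow> sorted_wrt R (masked xs bs)"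
proof (induction xs arbitrary: bs)
  case Nil then show ?case by (simp add: masked_def)
next
  case (Cons a xs)
  show ?case
  proof (cases bs)
    case Nil then show ?thesis by (simp add: masked_def)
  next
    case (Cons b bs')
    have "sorted_wrt R (masked xs bs')" using Cons.IH Cons.prems by simp
    moreover have "\<forall>y\<in>set (masked xs bs'). R a y" using Cons.prems set_masked[of xs bs'] by auto
    ultimately show ?thesis using Cons by (auto simp: masked_def)
  qed
qed

lemma map_masked: "map f (masked xs bs) = masked (map f xs) bs"
proof (induction xs arbitrary: bs)
  case Nil then show ?case by (simp add: masked_def)
next
  case (Cons a xs) then show ?case by (cases bs) (auto simp: masked_def)
qed

lemma masked_map_fst_snd: "masked (map fst xs) (map snd xs) = map fst (filter snd xs)"
  by (simp add: masked_def zip_map_fst_snd)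

lemma max_chain_len_masked_word_points:
  assumes xs: "sorted_wrt (\<lambda>p q. fst p < fst q) xs" and P: "finite P" "set xs \<subseteq> P"
  shows "max_chain_len (word_points (masked (map snd xs) bs)) \<le> max_chain_len P"
proof -
  have "max_chain_len (word_points (masked (map snd xs) bs))
      = max_chain_len (word_points (map snd (masked xs bs)))"
    by (simp add: map_masked)
  also have "\<dots> \<le> max_chain_len (set (masked xs bs))"
    by (rule max_chain_len_word_points_of_sorted[OF sorted_wrt_masked[OF xs]])
  also have "\<dots> \<le> max_chain_len P"
    using P set_masked[of xs bs] by (intro max_chain_len_subset) auto
  finally show ?thesis .
qed

section \<open>Selecting \<open>k\<close> marked occurrences of each letter\<close>

text \<open>\<open>\<beta> a\<close> lists the marks of the successive occurrences of the letter \<open>a\<close> in \<open>u\<close>;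
  \<open>marks u \<beta>\<close> distributes them over the positions of \<open>u\<close>.\<close>

fun marks :: "nat list \<Rightarrow> (nat \<Rightarrow> bool list) \<Rightarrow> bool list" where
  "marks [] \<beta> = []"
| "marks (a#u) \<beta> = hd (\<beta> a) # marks u (\<beta>(a := tl (\<beta> a)))"

definition select_marked :: "nat list \<Rightarrow> (nat \<Rightarrow> bool list) \<Rightarrow> nat list" where
  "select_marked u \<beta> = masked u (marks u \<beta>)"

definition words_with_counts :: "nat \<Rightarrow> (nat \<Rightarrow> nat) \<Rightarrow> nat list set" where
  "words_with_counts n c = {u. set u \<subseteq> {1..n} \<and> (\<forall>i\<in>{1..n}. count (mset u) i = c i)}"

definition markings :: "nat \<Rightarrow> nat \<Rightarrow> (nat \<Rightarrow> nat) \<Rightarrow> (nat \<Rightarrow> bool list) set" where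
  "markings n k c = {\<beta>. (\<forall>i\<in>{1..n}. length (\<beta> i) = c i \<and> count (mset (\<beta> i)) True = k)
                      \<and> (\<forall>i. i \<notin> {1..n} \<longrightarrow> \<beta> i = [])}"

definition selection_fiber ::
    "nat \<Rightarrow> nat \<Rightarrow> (nat \<Rightarrow> nat) \<Rightarrow> nat list \<Rightarrow> (nat list \<times> (nat \<Rightarrow> bool list)) set" where
  "selection_fiber n k c w =
     {(u,\<beta>). u \<in> words_with_counts n c \<and> \<beta> \<in> markings n k c \<and> select_marked u \<beta> = w}"

definition marked_words :: "nat \<Rightarrow> (nat \<Rightarrow> nat) \<Rightarrow> nat list \<Rightarrow> (nat \<times> bool) list set" where
  "marked_words n c w = {um. set (map fst um) \<subseteq> {1..n}
      \<and> (\<forall>i\<in>{1..n}. count (mset (map fst um)) i = c i) \<and> map fst (filter snd um) = w}"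

definition marks_by_letter :: "nat \<Rightarrow> (nat \<times> bool) list \<Rightarrow> nat \<Rightarrow> bool list" where
  "marks_by_letter n um = (\<lambda>i. if i \<in> {1..n} then map snd (filter (\<lambda>p. fst p = i) um) else [])"

lemma length_marks [simp]: "length (marks u \<beta>) = length u"
  by (induction u arbitrary: \<beta>) auto

lemma marks_of_letter:
  "(\<forall>a\<in>set u. count (mset u) a \<le> length (\<beta> a)) \<Longrightarrow>
    map snd (filter (\<lambda>p. fst p = i) (zip u (marks u \<beta>))) = take (count (mset u) i) (\<beta> i)"
proof (induction u arbitrary: \<beta>)
  case Nil then show ?case by simp
next
  case (Cons a u)
  let ?\<beta>' = "\<beta>(a := tl (\<beta> a))"
  have "\<forall>b\<in>set u. count (mset u) b \<le> length (?\<beta>' b)"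
  proof
    fix b assume b: "b \<in> set u"
    have "count (mset (a#u)) b \<le> length (\<beta> b)" using Cons.prems b by auto
    then show "count (mset u) b \<le> length (?\<beta>' b)" by (cases "b = a") auto
  qed
  note IH = Cons.IH[OF this]
  have ne: "\<beta> a \<noteq> []" using Cons.prems by (cases "\<beta> a") auto
  show ?case
  proof (cases "i = a")
    case True
    have "take (Suc (count (mset u) a)) (\<beta> a) = hd (\<beta> a) # take (count (mset u) a) (tl (\<beta> a))"
      using ne by (cases "\<beta> a") auto
    then show ?thesis using True IH by (simp add: fun_upd_def)
  next
    case False
    then show ?thesis using IH by (simp add: fun_upd_def)
  qed
qed

lemma marks_by_letter_zip_marks:
  "u \<in> words_with_counts n c \<Longrightarrow> \<beta> \<in> markings n k c \<Longrightarrow> marks_by_letter n (zip u (marks u \<beta>)) = \<beta>"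
proof (rule ext)
  fix i assume u: "u \<in> words_with_counts n c" and b: "\<beta> \<in> markings n k c"
  have "\<forall>a\<in>set u. count (mset u) a \<le> length (\<beta> a)"
    using u b by (auto simp: words_with_counts_def markings_def)
  then show "marks_by_letter n (zip u (marks u \<beta>)) i = \<beta> i"
    using marks_of_letter[of u \<beta> i] u b
    by (cases "i \<in> {1..n}") (auto simp: marks_by_letter_def words_with_counts_def markings_def)
qed

lemma marks_marks_by_letter:
  "set (map fst um) \<subseteq> {1..n} \<Longrightarrow> marks (map fst um) (marks_by_letter n um) = map snd um"
proof (induction um)
  case Nil then show ?case by simp
next
  case (Cons p um)
  obtain a b where p: "p = (a,b)" by (cases p)
  have a: "a \<in> {1..n}" using Cons.prems p by auto
  have "marks_by_letter n (p#um) a = b # marks_by_letter n um a"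
    using a p by (simp add: marks_by_letter_def)
  moreover have "(marks_by_letter n (p#um))(a := tl (marks_by_letter n (p#um) a)) = marks_by_letter n um"
    using a p by (auto simp: marks_by_letter_def fun_eq_iff)
  ultimately show ?case using Cons p by simp
qed

lemma count_True_filter_fst:
  "count (mset (map snd (filter (\<lambda>p. fst p = i) um))) True = count (mset (map fst (filter snd um))) i"
  by (induction um) auto

lemma mset_eq_if_multiset_perms:
  assumes "w \<in> multiset_perms n k" "w' \<in> multiset_perms n k"
  shows "mset w = mset w'"
proof (rule multiset_eqI)
  fix x show "count (mset w) x = count (mset w') x"
  proof (cases "x \<in> {1..n}")
    case True then show ?thesis using assms by (simp add: multiset_perms_def)
  next
    case False
    then have "x \<notin> set w" "x \<notin> set w'" using assms by (auto simp: multiset_perms_def)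
    then show ?thesis by (metis count_mset_0_iff set_mset_mset)
  qed
qed

lemma markings_marks_by_letter:
  assumes um: "um \<in> marked_words n c w" and w: "w \<in> multiset_perms n k"
  shows "marks_by_letter n um \<in> markings n k c"
  unfolding markings_def mem_Collect_eq
proof (intro conjI ballI allI impI)
  fix i assume i: "i \<in> {1..n}"
  have ui: "marks_by_letter n um i = map snd (filter (\<lambda>p. fst p = i) um)"
    using i by (simp add: marks_by_letter_def)
  show "length (marks_by_letter n um i) = c i"
    using um i by (simp add: ui length_filter_fst_eq_count marked_words_def)
  have "count (mset (marks_by_letter n um i)) True = count (mset (map fst (filter snd um))) i"
    unfolding ui by (rule count_True_filter_fst)
  also have "\<dots> = k" using um w i by (simp add: marked_words_def multiset_perms_def)
  finally show "count (mset (marks_by_letter n um i)) True = k" .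
qed (auto simp: marks_by_letter_def)

lemma bij_betw_selection_fiber_marked_words:
  assumes w: "w \<in> multiset_perms n k"
  shows "bij_betw (\<lambda>(u,\<beta>). zip u (marks u \<beta>)) (selection_fiber n k c w) (marked_words n c w)"
proof (rule bij_betw_byWitness[where f' = "\<lambda>um. (map fst um, marks_by_letter n um)"])
  show "\<forall>a\<in>selection_fiber n k c w.
      (\<lambda>um. (map fst um, marks_by_letter n um)) ((\<lambda>(u,\<beta>). zip u (marks u \<beta>)) a) = a"
    by (auto simp: selection_fiber_def marks_by_letter_zip_marks)
  show "\<forall>a'\<in>marked_words n c w.
      (\<lambda>(u,\<beta>). zip u (marks u \<beta>)) ((\<lambda>um. (map fst um, marks_by_letter n um)) a') = a'"
    by (auto simp: marked_words_def marks_marks_by_letter zip_map_fst_snd)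
  show "(\<lambda>(u,\<beta>). zip u (marks u \<beta>)) ` selection_fiber n k c w \<subseteq> marked_words n c w"
  proof (rule image_subsetI)
    fix x assume "x \<in> selection_fiber n k c w"
    then obtain u \<beta> where x: "x = (u,\<beta>)" "u \<in> words_with_counts n c" "select_marked u \<beta> = w"
      by (auto simp: selection_fiber_def)
    have m: "map fst (zip u (marks u \<beta>)) = u" by (simp add: map_fst_zip)
    have "zip u (marks u \<beta>) \<in> marked_words n c w"
      unfolding marked_words_def mem_Collect_eq m
      using x by (simp add: words_with_counts_def select_marked_def masked_def)
    then show "(\<lambda>(u,\<beta>). zip u (marks u \<beta>)) x \<in> marked_words n c w" using x(1) by simp
  qed
  show "(\<lambda>um. (map fst um, marks_by_letter n um)) ` marked_words n c w \<subseteq> selection_fiber n k c w"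
    using markings_marks_by_letter[OF _ w]
    by (auto simp: selection_fiber_def words_with_counts_def marked_words_def select_marked_def
        marks_marks_by_letter masked_map_fst_snd)
qed

fun relabel_marked :: "(nat \<times> bool) list \<Rightarrow> nat list \<Rightarrow> (nat \<times> bool) list" where
  "relabel_marked [] w = []"
| "relabel_marked (p#um) w =
     (if snd p then (hd w, True) # relabel_marked um (tl w) else p # relabel_marked um w)"

lemma marked_letters_relabel_marked:
  "length (filter snd um) = length w \<Longrightarrow> map fst (filter snd (relabel_marked um w)) = w"
proof (induction um arbitrary: w)
  case Nil then show ?case by simp
next
  case (Cons p um)
  then show ?case by (cases w; cases p) auto
qed

lemma unmarked_relabel_marked:
  "filter (\<lambda>p. \<not> snd p) (relabel_marked um w) = filter (\<lambda>p. \<not> snd p) um"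
  by (induction um arbitrary: w) auto

lemma relabel_marked_relabel_marked:
  "length (filter snd um) = length w \<Longrightarrow>
     relabel_marked (relabel_marked um w) (map fst (filter snd um)) = um"
proof (induction um arbitrary: w)
  case Nil then show ?case by simp
next
  case (Cons p um)
  then show ?case by (cases w; cases p) auto
qed

lemma mset_map_fst_split:
  "mset (map fst um) = mset (map fst (filter snd um)) + mset (map fst (filter (\<lambda>p. \<not> snd p) um))"
  by (induction um) auto

lemma relabel_marked_in_marked_words:
  assumes um: "um \<in> marked_words n c w" and l: "length w = length w'" and m: "mset w = mset w'"
  shows "relabel_marked um w' \<in> marked_words n c w'"
proof -
  have fl: "length (filter snd um) = length w'"
    using um l by (auto simp: marked_words_def dest: arg_cong[where f=length])
  have "mset (map fst (relabel_marked um w')) = mset (map fst (filter snd (relabel_marked um w')))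
      + mset (map fst (filter (\<lambda>p. \<not> snd p) (relabel_marked um w')))"
    by (rule mset_map_fst_split)
  also have "\<dots> = mset w' + mset (map fst (filter (\<lambda>p. \<not> snd p) um))"
    using fl by (simp only: marked_letters_relabel_marked unmarked_relabel_marked)
  also have "\<dots> = mset (map fst um)"
  proof -
    have "mset (map fst (filter snd um)) = mset w'" using um m by (simp add: marked_words_def)
    then show ?thesis by (metis mset_map_fst_split)
  qed
  finally have me: "mset (map fst (relabel_marked um w')) = mset (map fst um)" .
  then have "set (map fst (relabel_marked um w')) = set (map fst um)"
    by (metis set_mset_mset)
  then show ?thesis
    using um me marked_letters_relabel_marked[OF fl] by (auto simp: marked_words_def)
qed

lemma bij_betw_relabel_marked:
  assumes w: "w \<in> multiset_perms n k" and w': "w' \<in> multiset_perms n k"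
  shows "bij_betw (\<lambda>um. relabel_marked um w') (marked_words n c w) (marked_words n c w')"
proof (rule bij_betw_byWitness[where f' = "\<lambda>um. relabel_marked um w"])
  have lw: "length w = length w'" using w w' by (simp add: multiset_perms_def)
  have mw: "mset w = mset w'" by (rule mset_eq_if_multiset_perms[OF w w'])
  have inv: "relabel_marked (relabel_marked um v') v = um"
    if "um \<in> marked_words n c v" "length v = length v'" for um v v'
    using that relabel_marked_relabel_marked[of um v']
    by (auto simp: marked_words_def dest: arg_cong[where f=length])
  show "\<forall>a\<in>marked_words n c w. relabel_marked (relabel_marked a w') w = a"
    using inv lw by blast
  show "\<forall>a\<in>marked_words n c w'. relabel_marked (relabel_marked a w) w' = a"
    using inv lw by (metis)
  show "(\<lambda>um. relabel_marked um w') ` marked_words n c w \<subseteq> marked_words n c w'"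
    using relabel_marked_in_marked_words lw mw by blast
  show "(\<lambda>um. relabel_marked um w) ` marked_words n c w' \<subseteq> marked_words n c w"
    using relabel_marked_in_marked_words lw mw by (metis image_subsetI)
qed

lemma card_selection_fiber_eq:
  assumes "w \<in> multiset_perms n k" "w' \<in> multiset_perms n k"
  shows "card (selection_fiber n k c w) = card (selection_fiber n k c w')"
proof -
  have "card (selection_fiber n k c w) = card (marked_words n c w)"
    by (rule bij_betw_same_card[OF bij_betw_selection_fiber_marked_words[OF assms(1)]])
  also have "\<dots> = card (marked_words n c w')"
    by (rule bij_betw_same_card[OF bij_betw_relabel_marked[OF assms]])
  also have "\<dots> = card (selection_fiber n k c w')"
    by (rule bij_betw_same_card[OF bij_betw_selection_fiber_marked_words[OF assms(2)], symmetric])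
  finally show ?thesis .
qed

lemma select_marked_in_multiset_perms:
  assumes u: "u \<in> words_with_counts n c" and b: "\<beta> \<in> markings n k c"
  shows "select_marked u \<beta> \<in> multiset_perms n k"
proof -
  have pre: "\<forall>a\<in>set u. count (mset u) a \<le> length (\<beta> a)"
    using u b by (auto simp: words_with_counts_def markings_def)
  have cnt: "count (mset (select_marked u \<beta>)) i = k" if i: "i \<in> {1..n}" for i
  proof -
    have "count (mset (select_marked u \<beta>)) i
        = count (mset (map snd (filter (\<lambda>p. fst p = i) (zip u (marks u \<beta>))))) True"
      unfolding select_marked_def masked_def by (rule count_True_filter_fst[symmetric])
    also have "\<dots> = count (mset (take (count (mset u) i) (\<beta> i))) True"
      by (simp add: marks_of_letter[OF pre])
    also have "\<dots> = k" using u b i by (simp add: words_with_counts_def markings_def)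
    finally show ?thesis .
  qed
  have st: "set (select_marked u \<beta>) \<subseteq> {1..n}"
    using u set_masked[of u "marks u \<beta>"] by (auto simp: select_marked_def words_with_counts_def)
  have "length (select_marked u \<beta>) = (\<Sum>i\<in>{1..n}. count_list (select_marked u \<beta>) i)"
    using st by (simp add: sum_count_set)
  also have "\<dots> = k * n" using cnt by (simp add: count_mset[symmetric])
  finally show ?thesis using st cnt by (simp add: multiset_perms_def)
qed

fun block_word :: "nat \<Rightarrow> nat \<Rightarrow> nat list" where
  "block_word k 0 = []"
| "block_word k (Suc m) = block_word k m @ replicate k (Suc m)"

lemma block_word_in_multiset_perms: "block_word k n \<in> multiset_perms n k"
proof -
  have "set (block_word k m) \<subseteq> {1..m} \<and> length (block_word k m) = k * m
      \<and> (\<forall>a\<in>{1..m}. count (mset (block_word k m)) a = k)" for m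
  proof (induction m)
    case (Suc m)
    then have "count (mset (block_word k m)) (Suc m) = 0" by (auto simp: count_mset_0_iff)
    with Suc show ?case by (auto simp: le_Suc_eq)
  qed simp
  then show ?thesis by (simp add: multiset_perms_def)
qed

lemma multiset_perms_nonempty: "multiset_perms n k \<noteq> {}"
  using block_word_in_multiset_perms by blast

lemma finite_multiset_perms: "finite (multiset_perms n k)"
  by (rule finite_subset[of _ "{xs. set xs \<subseteq> {1..n} \<and> length xs = k * n}"])
     (auto simp: multiset_perms_def intro: finite_lists_length_eq)

lemma finite_markings: "finite (markings n k c)"
proof -
  let ?L = "\<lambda>i. {bs :: bool list. set bs \<subseteq> UNIV \<and> length bs = c i}"
  have "markings n k c \<subseteq> (\<lambda>f i. if i \<in> {1..n} then f i else []) ` PiE {1..n} ?L"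
  proof
    fix \<beta> assume "\<beta> \<in> markings n k c"
    then show "\<beta> \<in> (\<lambda>f i. if i \<in> {1..n} then f i else []) ` PiE {1..n} ?L"
      by (intro image_eqI[where x="restrict \<beta> {1..n}"]) (auto simp: markings_def fun_eq_iff)
  qed
  moreover have "finite (PiE {1..n} ?L)"
    by (intro finite_PiE finite_lists_length_eq) auto
  ultimately show ?thesis by (rule finite_subset[OF _ finite_imageI])
qed

lemma markings_nonempty:
  assumes "\<forall>i\<in>{1..n}. k \<le> c i"
  shows "markings n k c \<noteq> {}"
proof -
  have "(\<lambda>i. if i \<in> {1..n} then replicate k True @ replicate (c i - k) False else []) \<in> markings n k c"
    using assms by (auto simp: markings_def)
  then show ?thesis by blast
qed

lemma length_words_with_counts:
  assumes "u \<in> words_with_counts n c"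
  shows "length u = (\<Sum>i\<in>{1..n}. c i)"
proof -
  have "length u = (\<Sum>i\<in>{1..n}. count_list u i)"
    using assms by (simp add: sum_count_set words_with_counts_def)
  also have "\<dots> = (\<Sum>i\<in>{1..n}. c i)"
    using assms by (simp add: words_with_counts_def count_mset[symmetric])
  finally show ?thesis .
qed

lemma finite_words_with_counts: "finite (words_with_counts n c)"
  by (rule finite_subset[of _ "{xs. set xs \<subseteq> {1..n} \<and> length xs = (\<Sum>i\<in>{1..n}. c i)}"])
     (use length_words_with_counts in \<open>auto simp: words_with_counts_def intro: finite_lists_length_eq\<close>)

section \<open>Families of independent exponential variables\<close>

definition exp_measure :: "real \<Rightarrow> real measure" where
  "exp_measure l = density lborel (exponential_density l)"

definition iid_exp :: "real \<Rightarrow> ('i \<Rightarrow> real) measure" where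
  "iid_exp l = PiM UNIV (\<lambda>_. exp_measure l)"

lemma prob_space_exp_measure: "0 < l \<Longrightarrow> prob_space (exp_measure l)"
  unfolding exp_measure_def by (rule prob_space_exponential_density)

lemma sets_exp_measure [simp, measurable_cong]: "sets (exp_measure l) = sets borel"
  by (simp add: exp_measure_def)

lemma space_exp_measure [simp]: "space (exp_measure l) = UNIV"
  by (simp add: exp_measure_def)

lemma product_prob_space_exp_measure: "0 < l \<Longrightarrow> product_prob_space (\<lambda>_. exp_measure l)"
  by (simp add: product_prob_space_def product_sigma_finite_def prob_space_exp_measure
      prob_space_imp_sigma_finite product_prob_space_axioms_def)

lemma prob_space_iid_exp: "0 < l \<Longrightarrow> prob_space (iid_exp l)"
  unfolding iid_exp_def by (rule prob_space_PiM) (simp add: prob_space_exp_measure)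

lemma space_iid_exp [simp]: "space (iid_exp l) = UNIV"
  by (simp add: iid_exp_def space_PiM)

lemma measurable_iid_exp_component [measurable]: "(\<lambda>H. H i) \<in> borel_measurable (iid_exp l)"
  unfolding iid_exp_def
  by (metis (no_types) UNIV_I measurable_component_singleton sets_exp_measure measurable_cong_sets)

lemma measurable_iid_expI:
  assumes "\<And>i. (\<lambda>x. F x i) \<in> borel_measurable N"
  shows "F \<in> measurable N (iid_exp l)"
proof -
  have "(\<lambda>x i. F x i) \<in> measurable N (iid_exp l)"
    unfolding iid_exp_def by (rule measurable_PiM_single') (use assms in \<open>auto simp: space_PiM\<close>)
  then show ?thesis by simp
qed

lemma measurable_fun_upd_iid_exp [measurable]:
  "(\<lambda>(y,H). H(p:=y)) \<in> measurable (exp_measure l \<Otimes>\<^sub>M iid_exp l) (iid_exp l)"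
  by (rule measurable_iid_expI) (auto simp: split_beta)

lemma measurable_reindex_iid_exp [measurable]: "(\<lambda>H. H \<circ> s) \<in> measurable (iid_exp l) (iid_exp l)"
  by (rule measurable_iid_expI) simp

lemma emeasure_iid_exp_cylinder:
  assumes l: "0 < l" and J: "finite J" and F: "\<And>j. j \<in> J \<Longrightarrow> F j \<in> sets borel"
  shows "emeasure (iid_exp l) {H. \<forall>j\<in>J. H j \<in> F j} = (\<Prod>j\<in>J. emeasure (exp_measure l) (F j))"
proof -
  interpret product_prob_space "\<lambda>_. exp_measure l" UNIV
    using product_prob_space_exp_measure[OF l] .
  have "emeasure (iid_exp l) {x\<in>space (iid_exp l). \<forall>j\<in>J. x j \<in> F j}
      = (\<Prod>j\<in>J. emeasure (exp_measure l) (F j))"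
    unfolding iid_exp_def by (rule emeasure_PiM_Collect) (use J F in auto)
  then show ?thesis by simp
qed

lemma sets_iid_exp_cylinder:
  assumes "finite J" "\<And>j. j \<in> J \<Longrightarrow> F j \<in> sets borel"
  shows "{H. \<forall>j\<in>J. H j \<in> F j} \<in> sets (iid_exp l)"
proof (cases "J = {}")
  case True
  then show ?thesis using sets.top[of "iid_exp l"] by simp
next
  case False
  have "{H. \<forall>j\<in>J. H j \<in> F j} = (\<Inter>j\<in>J. (\<lambda>H. H j) -` F j \<inter> space (iid_exp l))"
    using False by auto
  also have "\<dots> \<in> sets (iid_exp l)"
    using False assms by (intro sets.finite_INT measurable_sets[OF measurable_iid_exp_component]) auto
  finally show ?thesis .
qed

lemma iid_exp_eqI:
  fixes N :: "('i \<Rightarrow> real) measure"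
  assumes l: "0 < l" and sets: "sets N = sets (iid_exp l)"
    and eq: "\<And>J F. finite J \<Longrightarrow> (\<And>j. j \<in> J \<Longrightarrow> F j \<in> sets borel) \<Longrightarrow>
       emeasure N {H. \<forall>j\<in>J. H j \<in> F j} = (\<Prod>j\<in>J. emeasure (exp_measure l) (F j))"
  shows "N = iid_exp l"
proof -
  interpret product_prob_space "\<lambda>_. exp_measure l" UNIV
    using product_prob_space_exp_measure[OF l] .
  show ?thesis unfolding iid_exp_def
  proof (rule PiM_eq)
    show "sets N = sets (Pi\<^sub>M UNIV (\<lambda>_. exp_measure l))" using sets by (simp add: iid_exp_def)
  next
    fix J :: "'i set" and F assume J: "finite J" "J \<subseteq> UNIV" and F: "\<And>j. j \<in> J \<Longrightarrow> F j \<in> sets (exp_measure l)"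
    have "prod_emb UNIV (\<lambda>_. exp_measure l) J (Pi\<^sub>E J F) = {H. \<forall>j\<in>J. H j \<in> F j}"
      by (auto simp: prod_emb_def space_PiM PiE_iff)
    then show "emeasure N (prod_emb UNIV (\<lambda>_. exp_measure l) J (Pi\<^sub>E J F))
        = (\<Prod>j\<in>J. emeasure (exp_measure l) (F j))"
      using eq[OF J(1)] F by simp
  qed
qed

lemma distr_fun_upd_iid_exp:
  fixes p :: 'i
  assumes l: "0 < l"
  shows "distr (exp_measure l \<Otimes>\<^sub>M iid_exp l) (iid_exp l) (\<lambda>(y,H). H(p:=y)) = iid_exp l"
proof (rule iid_exp_eqI[OF l])
  fix J :: "'i set" and F :: "'i \<Rightarrow> real set" assume J: "finite J" and F: "\<And>j. j \<in> J \<Longrightarrow> F j \<in> sets borel"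
  interpret E: prob_space "exp_measure l" using prob_space_exp_measure[OF l] .
  interpret Q: prob_space "iid_exp l" using prob_space_iid_exp[OF l] .
  let ?C = "\<lambda>J. {H. \<forall>j\<in>J. H j \<in> F j}"
  define A where "A = (if p \<in> J then F p else UNIV)"
  have A: "A \<in> sets borel" and EA: "emeasure (exp_measure l) A * (\<Prod>j\<in>J-{p}. emeasure (exp_measure l) (F j))
      = (\<Prod>j\<in>J. emeasure (exp_measure l) (F j))"
    using F J E.emeasure_space_1 by (auto simp: A_def prod.remove)
  have "(\<lambda>(y,H). H(p:=y)) -` ?C J \<inter> space (exp_measure l \<Otimes>\<^sub>M iid_exp l) = A \<times> ?C (J-{p})"
    by (auto simp: space_pair_measure A_def split: if_splits; metis)
  then have "emeasure (distr (exp_measure l \<Otimes>\<^sub>M iid_exp l) (iid_exp l) (\<lambda>(y,H). H(p:=y))) (?C J)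
      = emeasure (exp_measure l \<Otimes>\<^sub>M iid_exp l) (A \<times> ?C (J-{p}))"
    using J F by (subst emeasure_distr) (auto intro: sets_iid_exp_cylinder)
  also have "\<dots> = emeasure (exp_measure l) A * emeasure (iid_exp l) (?C (J-{p}))"
    using J F A by (intro Q.emeasure_pair_measure_Times) (auto intro: sets_iid_exp_cylinder)
  also have "\<dots> = (\<Prod>j\<in>J. emeasure (exp_measure l) (F j))"
    using J F by (subst emeasure_iid_exp_cylinder[OF l]) (auto simp: EA)
  finally show "emeasure (distr (exp_measure l \<Otimes>\<^sub>M iid_exp l) (iid_exp l) (\<lambda>(y,H). H(p:=y))) (?C J)
      = (\<Prod>j\<in>J. emeasure (exp_measure l) (F j))" .
qed simp

lemma distr_reindex_iid_exp:
  fixes s :: "'i \<Rightarrow> 'i"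
  assumes l: "0 < l" and s: "inj s"
  shows "distr (iid_exp l) (iid_exp l) (\<lambda>H. H \<circ> s) = iid_exp l"
proof (rule iid_exp_eqI[OF l])
  fix J :: "'i set" and F :: "'i \<Rightarrow> real set" assume J: "finite J" and F: "\<And>j. j \<in> J \<Longrightarrow> F j \<in> sets borel"
  have "(\<lambda>H. H \<circ> s) -` {H. \<forall>j\<in>J. H j \<in> F j} \<inter> space (iid_exp l)
      = {H. \<forall>j\<in>s ` J. H j \<in> F (inv s j)}"
    using s by auto
  then have "emeasure (distr (iid_exp l) (iid_exp l) (\<lambda>H. H \<circ> s)) {H. \<forall>j\<in>J. H j \<in> F j}
      = emeasure (iid_exp l) {H. \<forall>j\<in>s ` J. H j \<in> F (inv s j)}"
    using J F by (subst emeasure_distr) (auto intro: sets_iid_exp_cylinder)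
  also have "\<dots> = (\<Prod>j\<in>s ` J. emeasure (exp_measure l) (F (inv s j)))"
    using J F s by (subst emeasure_iid_exp_cylinder[OF l]) auto
  also have "\<dots> = (\<Prod>j\<in>J. emeasure (exp_measure l) (F j))"
    using s by (subst prod.reindex) (auto simp: inj_on_def)
  finally show "emeasure (distr (iid_exp l) (iid_exp l) (\<lambda>H. H \<circ> s)) {H. \<forall>j\<in>J. H j \<in> F j}
      = (\<Prod>j\<in>J. emeasure (exp_measure l) (F j))" .
qed simp

lemma nn_integral_iid_exp_fun_upd:
  fixes p :: 'i
  assumes l: "0 < l" and g: "g \<in> borel_measurable (iid_exp l)"
  shows "(\<integral>\<^sup>+H. g H \<partial>iid_exp l) = (\<integral>\<^sup>+y. \<integral>\<^sup>+H. g (H(p := y)) \<partial>iid_exp l \<partial>exp_measure l)"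
proof -
  interpret Q: prob_space "iid_exp l" using prob_space_iid_exp[OF l] .
  have gm: "(\<lambda>z. g ((snd z)(p := fst z))) \<in> borel_measurable (exp_measure l \<Otimes>\<^sub>M iid_exp l)"
    using measurable_comp[OF measurable_fun_upd_iid_exp g] by (simp add: comp_def split_beta')
  have "(\<integral>\<^sup>+H. g H \<partial>iid_exp l)
      = (\<integral>\<^sup>+H. g H \<partial>distr (exp_measure l \<Otimes>\<^sub>M iid_exp l) (iid_exp l) (\<lambda>(y,H). H(p:=y)))"
    by (simp add: distr_fun_upd_iid_exp[OF l])
  also have "\<dots> = (\<integral>\<^sup>+z. g ((snd z)(p := fst z)) \<partial>(exp_measure l \<Otimes>\<^sub>M iid_exp l))"
    using g by (subst nn_integral_distr) (auto simp: split_beta')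
  also have "\<dots> = (\<integral>\<^sup>+y. \<integral>\<^sup>+H. g (H(p := y)) \<partial>iid_exp l \<partial>exp_measure l)"
    using gm by (subst Q.nn_integral_fst[symmetric]) simp_all
  finally show ?thesis .
qed

lemma nn_integral_exp_measure_memoryless:
  assumes l: "0 < l" and t: "0 \<le> t" and f: "f \<in> borel_measurable borel"
  shows "(\<integral>\<^sup>+y. indicator {t<..} y * f (y - t) \<partial>exp_measure l)
       = ennreal (exp (- l * t)) * (\<integral>\<^sup>+y. f y \<partial>exp_measure l)"
proof -
  have "(\<integral>\<^sup>+y. indicator {t<..} y * f (y - t) \<partial>exp_measure l)
      = (\<integral>\<^sup>+y. ennreal (exponential_density l y) * (indicator {t<..} y * f (y - t)) \<partial>lborel)"
    unfolding exp_measure_def using f by (subst nn_integral_density) auto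
  also have "\<dots> = (\<integral>\<^sup>+z. ennreal (exponential_density l (t + z))
                      * (indicator {t<..} (t + z) * f (t + z - t)) \<partial>lborel)"
    using f by (subst lborel_distr_plus[symmetric, of t]) (subst nn_integral_distr, auto)
  also have "\<dots> = (\<integral>\<^sup>+z. ennreal (exp (- l * t)) * (ennreal (exponential_density l z) * f z) \<partial>lborel)"
  proof (rule nn_integral_cong_AE)
    show "AE z in lborel. ennreal (exponential_density l (t + z)) * (indicator {t<..} (t + z) * f (t + z - t))
         = ennreal (exp (- l * t)) * (ennreal (exponential_density l z) * f z)"
      using AE_lborel_singleton[of 0]
    proof eventually_elim
      case (elim z)
      show ?case
      proof (cases "z < 0")
        case False
        with elim have "0 < z" by simp
        then have "exponential_density l (t + z) = exp (- l * t) * exponential_density l z"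
          using t by (simp add: exponential_density_def algebra_simps exp_add[symmetric])
        then show ?thesis using \<open>0 < z\<close> by (simp add: indicator_def ennreal_mult' mult.assoc)
      qed (simp add: exponential_density_def indicator_def)
    qed
  qed
  also have "\<dots> = ennreal (exp (- l * t)) * (\<integral>\<^sup>+z. ennreal (exponential_density l z) * f z \<partial>lborel)"
    using f by (subst nn_integral_cmult) auto
  also have "\<dots> = ennreal (exp (- l * t)) * (\<integral>\<^sup>+y. f y \<partial>exp_measure l)"
    unfolding exp_measure_def using f by (subst nn_integral_density) auto
  finally show ?thesis .
qed

lemma emeasure_exp_measure_greaterThan:
  assumes l: "0 < l" and t: "0 \<le> t"
  shows "emeasure (exp_measure l) {t<..} = ennreal (exp (- l * t))"
proof -
  interpret E: prob_space "exp_measure l" using prob_space_exp_measure[OF l] .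
  have "emeasure (exp_measure l) {t<..} = (\<integral>\<^sup>+y. indicator {t<..} y * (\<lambda>_. 1) (y - t) \<partial>exp_measure l)"
    by (simp add: nn_integral_indicator)
  also have "\<dots> = ennreal (exp (- l * t)) * (\<integral>\<^sup>+y. 1 \<partial>exp_measure l)"
    by (rule nn_integral_exp_measure_memoryless[OF l t]) simp
  finally show ?thesis using E.emeasure_space_1 by simp
qed

lemma nn_integral_iid_exp_memoryless:
  fixes p :: 'i
  assumes l: "0 < l" and t: "0 \<le> t" and g: "g \<in> borel_measurable (iid_exp l)"
  shows "(\<integral>\<^sup>+H. indicator {t<..} (H p) * g (H(p := H p - t)) \<partial>iid_exp l)
       = ennreal (exp (- l * t)) * (\<integral>\<^sup>+H. g H \<partial>iid_exp l)"
proof -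
  interpret Q: prob_space "iid_exp l" using prob_space_iid_exp[OF l] .
  define \<phi> where "\<phi> y = (\<integral>\<^sup>+H. g (H(p := y)) \<partial>iid_exp l)" for y
  have "(\<lambda>z. g ((snd z)(p := fst z))) \<in> borel_measurable (exp_measure l \<Otimes>\<^sub>M iid_exp l)"
    using measurable_comp[OF measurable_fun_upd_iid_exp g] by (simp add: comp_def split_beta')
  moreover have "sets (exp_measure l \<Otimes>\<^sub>M iid_exp l) = sets (borel \<Otimes>\<^sub>M iid_exp l)"
    by (rule sets_pair_measure_cong) simp_all
  ultimately have "case_prod (\<lambda>y H. g (H(p := y))) \<in> borel_measurable (borel \<Otimes>\<^sub>M iid_exp l)"
    by (simp add: split_beta' cong: measurable_cong_sets)
  then have \<phi>: "\<phi> \<in> borel_measurable borel"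
    unfolding \<phi>_def by (rule Q.borel_measurable_nn_integral)
  have gt: "(\<lambda>H. indicator {t<..} (H p) * g (H(p := H p - t))) \<in> borel_measurable (iid_exp l)"
  proof -
    have "(\<lambda>H. H(p := H p - t)) \<in> measurable (iid_exp l) (iid_exp l)"
      by (rule measurable_iid_expI) auto
    from measurable_comp[OF this g] show ?thesis by (simp add: comp_def)
  qed
  have "(\<integral>\<^sup>+H. indicator {t<..} (H p) * g (H(p := H p - t)) \<partial>iid_exp l)
      = (\<integral>\<^sup>+y. \<integral>\<^sup>+H. indicator {t<..} y * g (H(p := y - t)) \<partial>iid_exp l \<partial>exp_measure l)"
    using nn_integral_iid_exp_fun_upd[OF l gt, where p=p] by simp
  also have "\<dots> = (\<integral>\<^sup>+y. indicator {t<..} y * \<phi> (y - t) \<partial>exp_measure l)"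
  proof (intro nn_integral_cong)
    fix y
    have "(\<lambda>H. H(p := y - t)) \<in> measurable (iid_exp l) (iid_exp l)"
      by (rule measurable_iid_expI) auto
    from measurable_comp[OF this g] show "(\<integral>\<^sup>+H. indicator {t<..} y * g (H(p := y - t)) \<partial>iid_exp l)
        = indicator {t<..} y * \<phi> (y - t)"
      unfolding \<phi>_def by (simp add: nn_integral_cmult comp_def)
  qed
  also have "\<dots> = ennreal (exp (- l * t)) * (\<integral>\<^sup>+y. \<phi> y \<partial>exp_measure l)"
    by (rule nn_integral_exp_measure_memoryless[OF l t \<phi>])
  also have "(\<integral>\<^sup>+y. \<phi> y \<partial>exp_measure l) = (\<integral>\<^sup>+H. g H \<partial>iid_exp l)"
    unfolding \<phi>_def by (rule nn_integral_iid_exp_fun_upd[OF l g, symmetric])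
  finally show ?thesis .
qed

definition shift_on :: "'i set \<Rightarrow> real \<Rightarrow> ('i \<Rightarrow> real) \<Rightarrow> 'i \<Rightarrow> real" where
  "shift_on F t H = (\<lambda>q. if q \<in> F then H q - t else H q)"

lemma measurable_shift_on [measurable]: "shift_on F t \<in> measurable (iid_exp l) (iid_exp l)"
  unfolding shift_on_def by (rule measurable_iid_expI) auto

lemma nn_integral_iid_exp_memoryless_on:
  assumes l: "0 < l" and t: "0 \<le> t" and F: "finite F" and g: "g \<in> borel_measurable (iid_exp l)"
  shows "(\<integral>\<^sup>+H. (\<Prod>p\<in>F. indicator {t<..} (H p)) * g (shift_on F t H) \<partial>iid_exp l)
      = ennreal (exp (- l * t)) ^ card F * (\<integral>\<^sup>+H. g H \<partial>iid_exp l)"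
  using F g
proof (induction F arbitrary: g rule: finite_induct)
  case empty
  then show ?case by (simp add: shift_on_def)
next
  case (insert p F)
  define g' where "g' = (\<lambda>K. (\<Prod>q\<in>F. indicator {t<..} (K q)) * g (shift_on F t K))"
  have g'm: "g' \<in> borel_measurable (iid_exp l)"
    unfolding g'_def using insert.prems by measurable
  have "(\<Prod>q\<in>insert p F. indicator {t<..} (H q)) * g (shift_on (insert p F) t H)
      = indicator {t<..} (H p) * g' (H(p := H p - t))" for H
  proof -
    have "(\<Prod>q\<in>F. indicator {t<..} ((H(p := H p - t)) q)) = (\<Prod>q\<in>F. indicator {t<..} (H q) :: ennreal)"
      using insert.hyps by (intro prod.cong) auto
    moreover have "shift_on F t (H(p := H p - t)) = shift_on (insert p F) t H"
      using insert.hyps by (auto simp: shift_on_def fun_eq_iff)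
    ultimately show ?thesis
      using insert.hyps by (simp add: g'_def mult.assoc)
  qed
  then have "(\<integral>\<^sup>+H. (\<Prod>q\<in>insert p F. indicator {t<..} (H q)) * g (shift_on (insert p F) t H) \<partial>iid_exp l)
      = (\<integral>\<^sup>+H. indicator {t<..} (H p) * g' (H(p := H p - t)) \<partial>iid_exp l)"
    by simp
  also have "\<dots> = ennreal (exp (- l * t)) * (\<integral>\<^sup>+H. g' H \<partial>iid_exp l)"
    by (rule nn_integral_iid_exp_memoryless[OF l t g'm])
  also have "(\<integral>\<^sup>+H. g' H \<partial>iid_exp l) = ennreal (exp (- l * t)) ^ card F * (\<integral>\<^sup>+H. g H \<partial>iid_exp l)"
    unfolding g'_def by (rule insert.IH[OF insert.prems])
  finally show ?case using insert.hyps by (simp add: mult.assoc)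
qed

lemma AE_iid_exp_pos: "0 < l \<Longrightarrow> AE G in iid_exp l. \<forall>i :: 'i :: countable. 0 < G i"
proof -
  assume l: "0 < l"
  interpret product_prob_space "\<lambda>_. exp_measure l" UNIV
    using product_prob_space_exp_measure[OF l] .
  have "AE x in exp_measure l. 0 < x"
    unfolding exp_measure_def
  proof (subst AE_density)
    show "AE x in lborel. 0 < ennreal (exponential_density l x) \<longrightarrow> 0 < x"
      using AE_lborel_singleton[of 0] by eventually_elim (auto simp: exponential_density_def)
  qed simp
  then show ?thesis
    unfolding iid_exp_def by (subst AE_all_countable) (auto intro: AE_component)
qed

lemma distributed_iid_exp_component:
  assumes l: "0 < l" and X: "X \<in> measurable M (iid_exp l)" and eq: "distr M (iid_exp l) X = iid_exp l"
  shows "distributed M lborel (\<lambda>\<omega>. X \<omega> i) (exponential_density l)"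
  unfolding distributed_def
proof (intro conjI)
  interpret product_prob_space "\<lambda>_. exp_measure l" UNIV
    using product_prob_space_exp_measure[OF l] .
  have m: "(\<lambda>H. H i) \<in> measurable (iid_exp l) lborel"
    unfolding measurable_lborel1 by (rule measurable_iid_exp_component)
  show "(\<lambda>\<omega>. X \<omega> i) \<in> measurable M lborel"
    using measurable_compose[OF X m] by simp
  have "distr (iid_exp l) (exp_measure l) (\<lambda>H. H i) = exp_measure l"
    unfolding iid_exp_def by (rule PiM_component) simp
  then have "distr (iid_exp l) lborel (\<lambda>H. H i) = exp_measure l"
    by (metis (no_types, lifting) distr_cong exp_measure_def sets_density sets_lborel)
  then show "distr M lborel (\<lambda>\<omega>. X \<omega> i) = density lborel (exponential_density l)"
    using distr_distr[OF m X] eq by (simp add: comp_def exp_measure_def)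
  show "(\<lambda>x. ennreal (exponential_density l x)) \<in> borel_measurable lborel"
    unfolding measurable_lborel2 by measurable
qed

lemma indep_vars_iid_exp_components:
  assumes l: "0 < l" and M: "prob_space M"
    and X: "X \<in> measurable M (iid_exp l)" and eq: "distr M (iid_exp l) X = iid_exp l"
  shows "prob_space.indep_vars M (\<lambda>_. borel) (\<lambda>i \<omega>. X \<omega> i) UNIV"
proof -
  interpret P: prob_space M by fact
  have rv: "P.random_variable borel (\<lambda>\<omega>. X \<omega> i)" for i
    using distributed_iid_exp_component[OF l X eq, of i] unfolding distributed_def measurable_lborel1 by blast
  have dist: "distr M borel (\<lambda>\<omega>. X \<omega> i) = exp_measure l" for i
  proof -
    have "distr M borel (\<lambda>\<omega>. X \<omega> i) = distr M lborel (\<lambda>\<omega>. X \<omega> i)"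
      by (rule distr_cong) simp_all
    also have "\<dots> = exp_measure l"
      using distributed_iid_exp_component[OF l X eq, of i] unfolding distributed_def exp_measure_def by blast
    finally show ?thesis .
  qed
  have s: "sets (\<Pi>\<^sub>M i\<in>UNIV. borel) = sets (iid_exp l)"
    unfolding iid_exp_def by (rule sets_PiM_cong) simp_all
  have "distr M (\<Pi>\<^sub>M i\<in>UNIV. borel) (\<lambda>x. \<lambda>i\<in>UNIV. X x i) = distr M (iid_exp l) X"
    by (rule distr_cong) (simp_all add: s restrict_def)
  also have "\<dots> = iid_exp l" by (rule eq)
  also have "\<dots> = (\<Pi>\<^sub>M i\<in>UNIV. distr M borel (\<lambda>\<omega>. X \<omega> i))"
    unfolding iid_exp_def dist ..
  finally show ?thesis
    using rv by (subst P.indep_vars_iff_distr_eq_PiM) auto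
qed

section \<open>The word of arrivals\<close>

text \<open>If the first point of
  the rows \<open>1..n\<close> lies in row \<open>a\<close>, then \<open>restart n a G\<close> are the gaps of the process seen from
  that point on.\<close>

definition restart :: "nat \<Rightarrow> nat \<Rightarrow> (nat \<times> nat \<Rightarrow> real) \<Rightarrow> nat \<times> nat \<Rightarrow> real" where
  "restart n a G = (\<lambda>(i,j). if i = a then G (a, Suc j)
                            else if i \<in> {1..n} \<and> j = 0 then G (i,0) - G (a,0) else G (i,j))"

definition skip_first :: "nat \<Rightarrow> nat \<times> nat \<Rightarrow> nat \<times> nat" where
  "skip_first a = (\<lambda>(i,j). if i = a then (a, Suc j) else (i,j))"

lemma inj_skip_first: "inj (skip_first a)"
  by (auto simp: inj_def skip_first_def split: if_splits)

lemma measurable_restart [measurable]: "restart n a \<in> measurable (iid_exp l) (iid_exp l)"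
  unfolding restart_def by (rule measurable_iid_expI) (auto simp: split_beta')

lemma restart_fun_upd_first:
  "restart n a (H((a,0) := y)) = shift_on ((\<lambda>i. (i,0)) ` ({1..n} - {a})) y (H \<circ> skip_first a)"
  by (auto simp: restart_def shift_on_def skip_first_def fun_eq_iff)

text \<open>Given the first arrival time \<open>y\<close> in row \<open>a\<close>, the other \<open>n - 1\<close> rows are empty up to \<open>y\<close>
  with probability \<open>exp (- l * y) ^ (n - 1)\<close>, and the restarted process is again iid exponential.\<close>

lemma nn_integral_restart:
  assumes l: "0 < l" and a: "a \<in> {1..n}" and y: "0 \<le> y"
    and f: "f \<in> borel_measurable (iid_exp l)"
  shows "(\<integral>\<^sup>+H. (\<Prod>i\<in>{1..n}-{a}. indicator {y<..} (H (i,0))) * f (restart n a (H((a,0) := y))) \<partial>iid_exp l)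
       = ennreal (exp (- l * y)) ^ (n - 1) * (\<integral>\<^sup>+H. f H \<partial>iid_exp l)"
proof -
  define F where "F = (\<lambda>i. (i,0::nat)) ` ({1..n} - {a})"
  have F: "finite F" "card F = n - 1"
    using a by (auto simp: F_def card_image inj_on_def)
  define \<phi> where "\<phi> K = (\<Prod>p\<in>F. indicator {y<..} (K p)) * f (shift_on F y K)" for K
  have \<phi>: "\<phi> \<in> borel_measurable (iid_exp l)"
    unfolding \<phi>_def using f by measurable
  have "(\<Prod>i\<in>{1..n}-{a}. indicator {y<..} (H (i,0))) = (\<Prod>p\<in>F. indicator {y<..} ((H \<circ> skip_first a) p) :: ennreal)"
    for H :: "nat \<times> nat \<Rightarrow> real"
    unfolding F_def by (subst prod.reindex) (auto simp: inj_on_def skip_first_def intro!: prod.cong)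
  then have "(\<integral>\<^sup>+H. (\<Prod>i\<in>{1..n}-{a}. indicator {y<..} (H (i,0))) * f (restart n a (H((a,0) := y))) \<partial>iid_exp l)
      = (\<integral>\<^sup>+H. \<phi> (H \<circ> skip_first a) \<partial>iid_exp l)"
    by (simp add: restart_fun_upd_first \<phi>_def F_def)
  also have "\<dots> = (\<integral>\<^sup>+H. \<phi> H \<partial>distr (iid_exp l) (iid_exp l) (\<lambda>H. H \<circ> skip_first a))"
    using \<phi> by (subst nn_integral_distr) auto
  also have "\<dots> = (\<integral>\<^sup>+H. \<phi> H \<partial>iid_exp l)"
    by (simp add: distr_reindex_iid_exp[OF l inj_skip_first])
  also have "\<dots> = ennreal (exp (- l * y)) ^ (n - 1) * (\<integral>\<^sup>+H. f H \<partial>iid_exp l)"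
    unfolding \<phi>_def F(2)[symmetric] by (rule nn_integral_iid_exp_memoryless_on[OF l y F(1) f])
  finally show ?thesis .
qed

lemma nn_integral_first_arrival:
  assumes l: "0 < l" and a: "a \<in> {1..n}" and f: "f \<in> borel_measurable (borel \<Otimes>\<^sub>M iid_exp l)"
  shows "(\<integral>\<^sup>+G. indicator {0<..x} (G (a,0)) * (\<Prod>i\<in>{1..n}-{a}. indicator {G (a,0)<..} (G (i,0)))
                * f (G (a,0), restart n a G) \<partial>iid_exp l)
       = (\<integral>\<^sup>+y. indicator {0<..x} y * ennreal (exp (- l * y)) ^ (n - 1) * (\<integral>\<^sup>+H. f (y, H) \<partial>iid_exp l)
            \<partial>exp_measure l)"
proof -
  define \<Phi> where "\<Phi> G = indicator {0<..x} (G (a,0)) * (\<Prod>i\<in>{1..n}-{a}. indicator {G (a,0)<..} (G (i,0)))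
      * f (G (a,0), restart n a G)" for G :: "nat \<times> nat \<Rightarrow> real"
  have \<Phi>: "\<Phi> \<in> borel_measurable (iid_exp l)"
  proof -
    have "(\<lambda>G. (G (a,0), restart n a G)) \<in> measurable (iid_exp l) (borel \<Otimes>\<^sub>M iid_exp l)"
      by (intro measurable_Pair) auto
    from measurable_comp[OF this f] show ?thesis
      unfolding \<Phi>_def indicator_def greaterThan_iff by (simp add: comp_def) measurable
  qed
  have "(\<integral>\<^sup>+H. \<Phi> (H((a,0) := y)) \<partial>iid_exp l)
      = indicator {0<..x} y * ennreal (exp (- l * y)) ^ (n - 1) * (\<integral>\<^sup>+H. f (y, H) \<partial>iid_exp l)" for y
  proof (cases "y \<in> {0<..x}")
    case True
    have "(\<integral>\<^sup>+H. \<Phi> (H((a,0) := y)) \<partial>iid_exp l) = (\<integral>\<^sup>+H. (\<Prod>i\<in>{1..n}-{a}. indicator {y<..} (H (i,0)))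
        * f (y, restart n a (H((a,0) := y))) \<partial>iid_exp l)"
      using True by (intro nn_integral_cong) (auto simp: \<Phi>_def intro!: prod.cong)
    also have "\<dots> = ennreal (exp (- l * y)) ^ (n - 1) * (\<integral>\<^sup>+H. f (y, H) \<partial>iid_exp l)"
      using True f by (intro nn_integral_restart[OF l a]) auto
    finally show ?thesis using True by simp
  qed (simp add: \<Phi>_def)
  then show ?thesis
    using nn_integral_iid_exp_fun_upd[OF l \<Phi>, where p="(a,0)"] by (simp add: \<Phi>_def)
qed

text \<open>\<open>arrival_word n u x G\<close>: the rows of the successive points of the rows \<open>1..n\<close> in \<open>(0, x]\<close> spell \<open>u\<close>,
  and no two of these points arrive at the same time.\<close>

fun arrival_word :: "nat \<Rightarrow> nat list \<Rightarrow> real \<Rightarrow> (nat \<times> nat \<Rightarrow> real) \<Rightarrow> bool" where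
  "arrival_word n [] x G = (\<forall>i\<in>{1..n}. x < G (i,0))"
| "arrival_word n (a#u) x G = (a \<in> {1..n} \<and> 0 < G (a,0) \<and> G (a,0) \<le> x
      \<and> (\<forall>i\<in>{1..n}-{a}. G (a,0) < G (i,0)) \<and> arrival_word n u (x - G (a,0)) (restart n a G))"

lemma measurable_arrival_word_pair:
  "Measurable.pred (borel \<Otimes>\<^sub>M iid_exp l) (\<lambda>z. arrival_word n u (fst z) (snd z))"
proof (induction u)
  case (Cons a u)
  have "(\<lambda>z. (fst z - snd z (a,0), restart n a (snd z))) \<in> measurable (borel \<Otimes>\<^sub>M iid_exp l) (borel \<Otimes>\<^sub>M iid_exp l)"
  proof (intro measurable_Pair)
    show "(\<lambda>z. restart n a (snd z)) \<in> measurable (borel \<Otimes>\<^sub>M iid_exp l) (iid_exp l)"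
      using measurable_comp[OF measurable_snd measurable_restart] by (simp add: comp_def)
  qed measurable
  from measurable_comp[OF this Cons.IH]
  have "Measurable.pred (borel \<Otimes>\<^sub>M iid_exp l) (\<lambda>z. arrival_word n u (fst z - snd z (a,0)) (restart n a (snd z)))"
    by (simp add: comp_def)
  then show ?case by simp measurable
qed simp

lemma measurable_arrival_word: "Measurable.pred (iid_exp l) (\<lambda>G. arrival_word n u x G)"
proof -
  have "(\<lambda>G. (x, G)) \<in> measurable (iid_exp l) (borel \<Otimes>\<^sub>M iid_exp l)" by measurable
  from measurable_comp[OF this measurable_arrival_word_pair] show ?thesis by (simp add: comp_def)
qed

lemma sets_arrival_word: "{G. arrival_word n u x G} \<in> sets (iid_exp l)"
proof -
  have "{G \<in> space (iid_exp l). arrival_word n u x G} \<in> sets (iid_exp l)"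
    using measurable_arrival_word by measurable
  then show ?thesis by simp
qed

lemma arrival_word_unique: "arrival_word n u x G \<Longrightarrow> arrival_word n v x G \<Longrightarrow> u = v"
proof (induction u arbitrary: v x G)
  case Nil
  then show ?case by (cases v) force+
next
  case (Cons a u)
  then obtain b v' where v: "v = b # v'" by (cases v) force+
  have "a = b"
  proof (rule ccontr)
    assume "a \<noteq> b"
    then have "G (a,0) < G (b,0)" "G (b,0) < G (a,0)" using Cons.prems v by auto
    then show False by simp
  qed
  with Cons.prems Cons.IH v show ?case by auto
qed

text \<open>The probability that the arrivals in \<open>(0, x]\<close> spell a given word of length \<open>m\<close> over \<open>n\<close> letters:
  it does not depend on the word.\<close>

definition word_prob :: "nat \<Rightarrow> real \<Rightarrow> nat \<Rightarrow> real \<Rightarrow> real" where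
  "word_prob n l m x = exp (- (n * l * x)) * (l * x) ^ m / fact m"

lemma word_prob_nonneg: "0 < l \<Longrightarrow> 0 \<le> x \<Longrightarrow> 0 \<le> word_prob n l m x"
  by (simp add: word_prob_def)

lemma nn_integral_power_interval:
  assumes x: "0 \<le> x" and C: "0 \<le> C"
  shows "(\<integral>\<^sup>+\<tau>. indicator {0<..x} \<tau> * ennreal (C * (x - \<tau>) ^ m) \<partial>lborel) = ennreal (C * x ^ Suc m / Suc m)"
proof -
  have "((\<lambda>\<tau>. - C * (x - \<tau>) ^ Suc m / Suc m) has_real_derivative (C * (x - \<tau>) ^ m)) (at \<tau> within {0..x})"
    for \<tau>
  proof -
    have "((\<lambda>y. y ^ Suc m) has_real_derivative real (Suc m) * (x - \<tau>) ^ m) (at (x - \<tau>))"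
      using DERIV_pow[of "Suc m" "x - \<tau>" UNIV] by simp
    moreover have "((\<lambda>\<tau>. x - \<tau>) has_real_derivative (0 - 1)) (at \<tau> within {0..x})"
      by (auto intro!: derivative_eq_intros)
    ultimately have "((\<lambda>\<tau>. (- C / Suc m) * (x - \<tau>) ^ Suc m) has_real_derivative
        ((- C / Suc m) * (real (Suc m) * (x - \<tau>) ^ m * (0 - 1)))) (at \<tau> within {0..x})"
      by (intro DERIV_cmult) (rule DERIV_chain2)
    moreover have "(- C / Suc m) * (real (Suc m) * (x - \<tau>) ^ m * (0 - 1)) = C * (x - \<tau>) ^ m"
      by (simp add: field_simps)
    moreover have "(\<lambda>\<tau>. (- C / Suc m) * (x - \<tau>) ^ Suc m) = (\<lambda>\<tau>. - C * (x - \<tau>) ^ Suc m / Suc m)"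
      by (simp add: fun_eq_iff field_simps)
    ultimately show ?thesis by simp
  qed
  then have "((\<lambda>\<tau>. C * (x - \<tau>) ^ m) has_integral (C * x ^ Suc m / Suc m)) {0..x}"
    using fundamental_theorem_of_calculus[OF x, of "\<lambda>\<tau>. - C * (x - \<tau>) ^ Suc m / Suc m"]
    by (simp add: has_real_derivative_iff_has_vector_derivative)
  then have "(\<integral>\<^sup>+\<tau>. ennreal (C * (x - \<tau>) ^ m) * indicator {0..x} \<tau> \<partial>lborel) = ennreal (C * x ^ Suc m / Suc m)"
    by (rule nn_integral_has_integral_lebesgue'[rotated]) (use C in auto)
  moreover have "(\<integral>\<^sup>+\<tau>. indicator {0<..x} \<tau> * ennreal (C * (x - \<tau>) ^ m) \<partial>lborel)
      = (\<integral>\<^sup>+\<tau>. ennreal (C * (x - \<tau>) ^ m) * indicator {0..x} \<tau> \<partial>lborel)"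
    by (rule nn_integral_cong_AE)
       (use AE_lborel_singleton[of 0] in \<open>eventually_elim, auto simp: indicator_def\<close>)
  ultimately show ?thesis by simp
qed

lemma nn_integral_word_prob_Suc:
  assumes l: "0 < l" and x: "0 \<le> x" and n: "1 \<le> n"
  shows "(\<integral>\<^sup>+\<tau>. indicator {0<..x} \<tau> * ennreal (exp (- l * \<tau>)) ^ (n - 1) * ennreal (word_prob n l m (x - \<tau>))
            \<partial>exp_measure l)
       = ennreal (word_prob n l (Suc m) x)"
proof -
  define C where "C = exp (- (n * l * x)) * l ^ Suc m / fact m"
  have "exponential_density l \<tau> * (exp (- l * \<tau>) ^ (n - 1) * word_prob n l m (x - \<tau>)) = C * (x - \<tau>) ^ m"
    if "0 < \<tau>" for \<tau>
  proof -
    have e1: "exp (- l * \<tau>) ^ (n - 1) * exp (- \<tau> * l) = exp (- (n * l * \<tau>))"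
      using n by (simp add: exp_of_nat_mult[symmetric] exp_add[symmetric] algebra_simps of_nat_diff)
    have e2: "exp (- (n * l * \<tau>)) * exp (- (n * l * (x - \<tau>))) = exp (- (n * l * x))"
      by (simp add: exp_add[symmetric] algebra_simps)
    have "exponential_density l \<tau> * (exp (- l * \<tau>) ^ (n - 1) * word_prob n l m (x - \<tau>))
        = l * (exp (- l * \<tau>) ^ (n - 1) * exp (- \<tau> * l)) * word_prob n l m (x - \<tau>)"
      using that by (simp add: exponential_density_def)
    also have "\<dots> = l * (exp (- (n * l * \<tau>)) * exp (- (n * l * (x - \<tau>)))) * (l * (x - \<tau>)) ^ m / fact m"
      unfolding e1 word_prob_def by simp
    also have "\<dots> = C * (x - \<tau>) ^ m"
      unfolding e2 C_def by (simp add: power_mult_distrib)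
    finally show ?thesis .
  qed
  then have "ennreal (exponential_density l \<tau>) * (indicator {0<..x} \<tau> * ennreal (exp (- l * \<tau>)) ^ (n - 1)
      * ennreal (word_prob n l m (x - \<tau>))) = indicator {0<..x} \<tau> * ennreal (C * (x - \<tau>) ^ m)" for \<tau>
    using l x by (cases "\<tau> \<in> {0<..x}")
      (auto simp: ennreal_power ennreal_mult'[symmetric] word_prob_nonneg exponential_density_def)
  then have "(\<integral>\<^sup>+\<tau>. indicator {0<..x} \<tau> * ennreal (exp (- l * \<tau>)) ^ (n - 1) * ennreal (word_prob n l m (x - \<tau>))
            \<partial>exp_measure l)
      = (\<integral>\<^sup>+\<tau>. indicator {0<..x} \<tau> * ennreal (C * (x - \<tau>) ^ m) \<partial>lborel)"
    unfolding exp_measure_def by (subst nn_integral_density) (auto simp: word_prob_def)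
  also have "\<dots> = ennreal (C * x ^ Suc m / Suc m)"
    using x l by (intro nn_integral_power_interval) (auto simp: C_def)
  also have "C * x ^ Suc m / Suc m = word_prob n l (Suc m) x"
    by (simp add: C_def word_prob_def power_mult_distrib field_simps)
  finally show ?thesis .
qed

lemma measurable_arrival_word_shift:
  "Measurable.pred (borel \<Otimes>\<^sub>M iid_exp l) (\<lambda>z. arrival_word n u (x - fst z) (snd z))"
proof -
  have "(\<lambda>z. (x - fst z, snd z)) \<in> measurable (borel \<Otimes>\<^sub>M iid_exp l) (borel \<Otimes>\<^sub>M iid_exp l)"
    by measurable
  from measurable_comp[OF this measurable_arrival_word_pair] show ?thesis
    by (simp add: comp_def)
qed

lemma emeasure_arrival_word_Nil:
  assumes l: "0 < l" and x: "0 \<le> x"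
  shows "emeasure (iid_exp l) {G. arrival_word n [] x G} = ennreal (word_prob n l 0 x)"
proof -
  have "emeasure (iid_exp l) {G. arrival_word n [] x G}
      = emeasure (iid_exp l) {G. \<forall>j\<in>(\<lambda>i. (i,0::nat)) ` {1..n}. G j \<in> {x<..}}"
    by (auto intro!: arg_cong[where f="emeasure (iid_exp l)"])
  also have "\<dots> = (\<Prod>j\<in>(\<lambda>i. (i,0::nat)) ` {1..n}. emeasure (exp_measure l) {x<..})"
    by (rule emeasure_iid_exp_cylinder[OF l]) auto
  also have "\<dots> = ennreal (word_prob n l 0 x)"
    using x l by (simp add: emeasure_exp_measure_greaterThan card_image inj_on_def word_prob_def
        ennreal_power exp_of_nat_mult[symmetric] algebra_simps)
  finally show ?thesis .
qed

lemma emeasure_arrival_word: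
  assumes l: "0 < l" and x: "0 \<le> x" and u: "set u \<subseteq> {1..n}"
  shows "emeasure (iid_exp l) {G. arrival_word n u x G} = ennreal (word_prob n l (length u) x)"
  using x u
proof (induction u arbitrary: x)
  case Nil
  then show ?case using emeasure_arrival_word_Nil[OF l] by simp
next
  case (Cons a u)
  have a: "a \<in> {1..n}" and u: "set u \<subseteq> {1..n}" using Cons.prems by auto
  define f :: "real \<times> (nat \<times> nat \<Rightarrow> real) \<Rightarrow> ennreal"
    where "f z = indicator {z. arrival_word n u (x - fst z) (snd z)} z" for z
  have f: "f \<in> borel_measurable (borel \<Otimes>\<^sub>M iid_exp l)"
    unfolding f_def using measurable_arrival_word_shift by measurable
  have ind: "indicator {G. arrival_word n (a#u) x G} G = indicator {0<..x} (G (a,0))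
      * (\<Prod>i\<in>{1..n}-{a}. indicator {G (a,0)<..} (G (i,0))) * f (G (a,0), restart n a G)" for G
    using a by (auto simp: indicator_def f_def prod_zero_iff)
  have "emeasure (iid_exp l) {G. arrival_word n (a#u) x G}
      = (\<integral>\<^sup>+G. indicator {G. arrival_word n (a#u) x G} G \<partial>iid_exp l)"
    by (rule nn_integral_indicator[symmetric, OF sets_arrival_word])
  also have "\<dots> = (\<integral>\<^sup>+G. indicator {0<..x} (G (a,0)) * (\<Prod>i\<in>{1..n}-{a}. indicator {G (a,0)<..} (G (i,0)))
              * f (G (a,0), restart n a G) \<partial>iid_exp l)"
    by (simp only: ind)
  also have "\<dots> = (\<integral>\<^sup>+y. indicator {0<..x} y * ennreal (exp (- l * y)) ^ (n - 1)
                      * (\<integral>\<^sup>+H. f (y, H) \<partial>iid_exp l) \<partial>exp_measure l)"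
    by (rule nn_integral_first_arrival[OF l a f])
  also have "\<dots> = (\<integral>\<^sup>+y. indicator {0<..x} y * ennreal (exp (- l * y)) ^ (n - 1)
                      * ennreal (word_prob n l (length u) (x - y)) \<partial>exp_measure l)"
  proof (intro nn_integral_cong)
    fix y :: real
    have "y \<in> {0<..x} \<Longrightarrow> (\<integral>\<^sup>+H. f (y, H) \<partial>iid_exp l) = emeasure (iid_exp l) {G. arrival_word n u (x - y) G}"
      unfolding f_def by (subst nn_integral_indicator[symmetric, OF sets_arrival_word])
        (auto intro!: nn_integral_cong simp: indicator_def)
    then show "indicator {0<..x} y * ennreal (exp (- l * y)) ^ (n - 1) * (\<integral>\<^sup>+H. f (y, H) \<partial>iid_exp l)
        = indicator {0<..x} y * ennreal (exp (- l * y)) ^ (n - 1) * ennreal (word_prob n l (length u) (x - y))"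
      using Cons.IH[OF _ u] by (cases "y \<in> {0<..x}") auto
  qed
  also have "\<dots> = ennreal (word_prob n l (length (a#u)) x)"
    using a by (simp only: length_Cons) (rule nn_integral_word_prob_Suc[OF l Cons.prems(1)], simp)
  finally show ?case .
qed

lemma sums_word_prob: "(\<lambda>m. real n ^ m * word_prob n l m x) sums 1"
proof -
  have "(\<lambda>m. exp (- (n * l * x)) * ((n * l * x) ^ m /\<^sub>R fact m)) sums (exp (- (n * l * x)) * exp (n * l * x))"
    by (intro sums_mult exp_converges)
  moreover have "exp (- (n * l * x)) * exp (n * l * x) = 1" by (simp add: exp_minus field_simps)
  moreover have "exp (- (n * l * x)) * ((n * l * x) ^ m /\<^sub>R fact m) = real n ^ m * word_prob n l m x" for m
    by (simp add: word_prob_def power_mult_distrib field_simps)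
  ultimately show ?thesis by simp
qed

text \<open>Summing the word probabilities over all words gives \<open>1\<close>: almost surely the arrivals in \<open>(0, x]\<close>
  are finitely many and at distinct times.\<close>

lemma AE_arrival_word:
  assumes l: "0 < l" and x: "0 \<le> x"
  shows "AE G in iid_exp l. \<exists>u. set u \<subseteq> {1..n} \<and> arrival_word n u x G"
proof -
  interpret Q: prob_space "iid_exp l" using prob_space_iid_exp[OF l] .
  define W where "W m = {u. set u \<subseteq> {1..n} \<and> length u = m}" for m
  define A where "A m = (\<Union>u\<in>W m. {G. arrival_word n u x G})" for m
  have W: "finite (W m)" "card (W m) = n ^ m" for m
    unfolding W_def by (auto intro: finite_lists_length_eq simp: card_lists_length_eq)
  have A: "A m \<in> sets (iid_exp l)" for m
    unfolding A_def using W by (intro sets.finite_UN sets_arrival_word) auto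
  have "emeasure (iid_exp l) (A m) = ennreal (real n ^ m * word_prob n l m x)" for m
  proof -
    have "emeasure (iid_exp l) (A m) = (\<Sum>u\<in>W m. emeasure (iid_exp l) {G. arrival_word n u x G})"
      unfolding A_def using W
      by (intro sum_emeasure[symmetric]) (auto simp: disjoint_family_on_def sets_arrival_word
          dest: arrival_word_unique)
    also have "\<dots> = (\<Sum>u\<in>W m. ennreal (word_prob n l m x))"
      by (intro sum.cong refl) (auto simp: W_def emeasure_arrival_word[OF l x])
    also have "\<dots> = ennreal (real n ^ m * word_prob n l m x)"
      using W by (simp add: ennreal_of_nat_eq_real_of_nat ennreal_mult'[symmetric] del: ennreal_mult')
    finally show ?thesis .
  qed
  moreover have "disjoint_family A"
    by (auto simp: disjoint_family_on_def A_def W_def dest: arrival_word_unique)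
  ultimately have "emeasure (iid_exp l) (\<Union>m. A m) = (\<Sum>m. ennreal (real n ^ m * word_prob n l m x))"
    using A by (subst suminf_emeasure[symmetric]) auto
  also have "\<dots> = 1"
    using sums_word_prob[of n l x] x l by (subst suminf_ennreal_eq) (auto simp: word_prob_def)
  finally have "AE G in iid_exp l. G \<in> (\<Union>m. A m)"
    using A by (subst Q.AE_in_set_eq_1) (auto simp: Q.emeasure_eq_measure)
  then show ?thesis
    by (rule AE_mp) (auto simp: A_def W_def)
qed

fun arrival_points :: "nat \<Rightarrow> nat list \<Rightarrow> (nat \<times> nat \<Rightarrow> real) \<Rightarrow> (real \<times> nat) list" where
  "arrival_points n [] G = []"
| "arrival_points n (a#u) G =
     (G (a,0), a) # map (\<lambda>(t,i). (t + G (a,0), i)) (arrival_points n u (restart n a G))"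

definition arrival_time :: "(nat \<times> nat \<Rightarrow> real) \<Rightarrow> nat \<Rightarrow> nat \<Rightarrow> real" where
  "arrival_time G i m = (\<Sum>j\<le>m. G (i,j))"

lemma ppp_window_conv_arrival_time:
  "ppp_window G x n = {(t,i). 1 \<le> i \<and> i \<le> n \<and> 0 \<le> t \<and> t \<le> x \<and> (\<exists>m. t = arrival_time G i m)}"
  by (simp add: ppp_window_def arrival_time_def)

lemma first_le_arrival_time: "\<forall>ij. 0 < G ij \<Longrightarrow> G (i,0) \<le> arrival_time G i m"
proof (induction m)
  case (Suc m)
  then show ?case by (auto simp: arrival_time_def intro: add_increasing2 less_imp_le)
qed (simp add: arrival_time_def)

lemma arrival_time_pos: "\<forall>ij. 0 < G ij \<Longrightarrow> 0 < arrival_time G i m"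
  using first_le_arrival_time by (meson less_le_trans)

lemma restart_pos:
  "\<forall>ij. 0 < G ij \<Longrightarrow> \<forall>i\<in>{1..n}-{a}. G (a,0) < G (i,0) \<Longrightarrow> \<forall>ij. 0 < restart n a G ij"
  by (auto simp: restart_def)

lemma arrival_time_restart_iff:
  assumes i: "i \<in> {1..n}"
  shows "(\<exists>m. t = arrival_time G i m)
     \<longleftrightarrow> (i = a \<and> t = G (a,0)) \<or> (\<exists>m. t - G (a,0) = arrival_time (restart n a G) i m)"
proof (cases "i = a")
  case True
  have Suc: "arrival_time G a (Suc m) = G (a,0) + arrival_time (restart n a G) a m" for m
    unfolding arrival_time_def by (subst sum.atMost_Suc_shift) (simp add: restart_def)
  show ?thesis
  proof
    assume "\<exists>m. t = arrival_time G i m"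
    then obtain m where m: "t = arrival_time G a m" using True by blast
    then show "(i = a \<and> t = G (a,0)) \<or> (\<exists>m. t - G (a,0) = arrival_time (restart n a G) i m)"
      using True Suc by (cases m) (auto simp: arrival_time_def)
  next
    assume "(i = a \<and> t = G (a,0)) \<or> (\<exists>m. t - G (a,0) = arrival_time (restart n a G) i m)"
    then show "\<exists>m. t = arrival_time G i m"
    proof
      assume "\<exists>m. t - G (a,0) = arrival_time (restart n a G) i m"
      then obtain m where "t - G (a,0) = arrival_time (restart n a G) a m" using True by blast
      then have "t = arrival_time G a (Suc m)" by (simp add: Suc)
      then show ?thesis using True by blast
    qed (auto simp: arrival_time_def intro: exI[of _ 0])
  qed
next
  case False
  have "arrival_time (restart n a G) i m = arrival_time G i m - G (a,0)" for m
    using i False by (induction m) (auto simp: arrival_time_def restart_def)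
  then show ?thesis using False by (metis diff_eq_eq)
qed

lemma ppp_window_restart:
  assumes pos: "\<forall>ij. 0 < G ij" and a: "a \<in> {1..n}" and x: "G (a,0) \<le> x"
    and lt: "\<forall>i\<in>{1..n}-{a}. G (a,0) < G (i,0)"
  shows "ppp_window G x n
       = insert (G (a,0), a) ((\<lambda>(t,i). (t + G (a,0), i)) ` ppp_window (restart n a G) (x - G (a,0)) n)"
proof (intro set_eqI)
  fix p :: "real \<times> nat"
  obtain t i where p: "p = (t,i)" by (cases p)
  let ?R = "restart n a G" and ?\<tau> = "G (a,0)"
  have img: "(t,i) \<in> (\<lambda>(s,j). (s + ?\<tau>, j)) ` S \<longleftrightarrow> (t - ?\<tau>, i) \<in> S" for S
    by (force simp: image_iff)
  have "(t,i) \<in> ppp_window G x n \<longleftrightarrow> (t,i) = (?\<tau>, a) \<or> (t - ?\<tau>, i) \<in> ppp_window ?R (x - ?\<tau>) n"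
  proof (cases "i \<in> {1..n}")
    case True
    have "(t,i) \<in> ppp_window G x n \<longleftrightarrow> t \<le> x \<and> (\<exists>m. t = arrival_time G i m)"
      using True arrival_time_pos[OF pos] by (auto simp: ppp_window_conv_arrival_time less_imp_le)
    moreover have "(t - ?\<tau>, i) \<in> ppp_window ?R (x - ?\<tau>) n
        \<longleftrightarrow> t \<le> x \<and> (\<exists>m. t - ?\<tau> = arrival_time ?R i m)"
      using True arrival_time_pos[OF restart_pos[OF pos lt]]
      by (auto simp: ppp_window_conv_arrival_time) (metis diff_ge_0_iff_ge less_imp_le)
    ultimately show ?thesis
      using arrival_time_restart_iff[OF True, of t G a] x by auto
  qed (use a in \<open>auto simp: ppp_window_conv_arrival_time\<close>)
  then show "p \<in> ppp_window G x n
      \<longleftrightarrow> p \<in> insert (?\<tau>, a) ((\<lambda>(t,i). (t + ?\<tau>, i)) ` ppp_window ?R (x - ?\<tau>) n)"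
    using img p by simp
qed

lemma ppp_window_eq_arrival_points:
  "\<forall>ij. 0 < G ij \<Longrightarrow> arrival_word n u x G \<Longrightarrow> ppp_window G x n = set (arrival_points n u G)"
proof (induction u arbitrary: x G)
  case Nil
  have "False" if "(t,i) \<in> ppp_window G x n" for t i
  proof -
    from that obtain m where i: "i \<in> {1..n}" and "t \<le> x" "t = arrival_time G i m"
      by (auto simp: ppp_window_conv_arrival_time)
    moreover have "x < G (i,0)" using Nil(2) i by simp
    ultimately show False using first_le_arrival_time[OF Nil(1), of i m] by linarith
  qed
  then show ?case by auto
next
  case (Cons a u)
  then have lt: "\<forall>i\<in>{1..n}-{a}. G (a,0) < G (i,0)" by simp
  have "ppp_window (restart n a G) (x - G (a,0)) n = set (arrival_points n u (restart n a G))"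
    using Cons by (intro Cons.IH restart_pos) auto
  then show ?case
    using Cons.prems by (simp add: ppp_window_restart[OF Cons.prems(1) _ _ lt] image_image)
qed

lemma arrival_points_sorted:
  "\<forall>ij. 0 < G ij \<Longrightarrow> arrival_word n u x G \<Longrightarrow>
     (\<forall>p\<in>set (arrival_points n u G). 0 < fst p) \<and> sorted_wrt (\<lambda>p q. fst p < fst q) (arrival_points n u G)
     \<and> map snd (arrival_points n u G) = u"
proof (induction u arbitrary: x G)
  case (Cons a u)
  from Cons.prems have t0: "0 < G (a,0)" and lt: "\<forall>i\<in>{1..n}-{a}. G (a,0) < G (i,0)"
    and R: "arrival_word n u (x - G (a,0)) (restart n a G)" by auto
  note IH = Cons.IH[OF restart_pos[OF Cons.prems(1) lt] R]
  have m: "map (\<lambda>(t::real, y::nat). y) xs = map snd xs" for xs :: "(real \<times> nat) list"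
    by (induction xs) auto
  show ?case using IH t0
    by (auto simp: sorted_wrt_map split_beta m intro: sorted_wrt_mono_rel[of _ "\<lambda>p q. fst p < fst q"])
qed simp

lemma card_ppp_window_row:
  assumes "\<forall>ij. 0 < G ij" "arrival_word n u x G"
  shows "card {p \<in> ppp_window G x n. snd p = i} = count (mset u) i"
proof -
  let ?P = "arrival_points n u G"
  have P: "sorted_wrt (\<lambda>p q. fst p < fst q) ?P" "map snd ?P = u"
    using arrival_points_sorted[OF assms] by auto
  have "{p \<in> ppp_window G x n. snd p = i} = set (filter (\<lambda>p. snd p = i) ?P)"
    using ppp_window_eq_arrival_points[OF assms] by auto
  also have "card \<dots> = length (filter (\<lambda>p. snd p = i) ?P)"
    using distinct_if_sorted_wrt_fst[OF P(1)] by (intro distinct_card) simp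
  also have "\<dots> = count (mset u) i"
    using P(2) by (simp add: length_filter_snd_eq_count)
  finally show ?thesis .
qed

section \<open>The coupling\<close>

lemma distr_snd_pair_prob_space:
  assumes "prob_space M" "sigma_finite_measure N"
  shows "distr (M \<Otimes>\<^sub>M N) N snd = N"
proof (rule measure_eqI)
  interpret M: prob_space M by fact
  interpret N: sigma_finite_measure N by fact
  fix A assume "A \<in> sets (distr (M \<Otimes>\<^sub>M N) N snd)"
  then have A: "A \<in> sets N" by simp
  have "emeasure (distr (M \<Otimes>\<^sub>M N) N snd) A = emeasure (M \<Otimes>\<^sub>M N) (space M \<times> A)"
    using A by (subst emeasure_distr) (auto simp: space_pair_measure intro!: arg_cong[where f="emeasure _"]
        dest: sets.sets_into_space)
  also have "\<dots> = emeasure N A"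
    using A by (simp add: N.emeasure_pair_measure_Times M.emeasure_space_1)
  finally show "emeasure (distr (M \<Otimes>\<^sub>M N) N snd) A = emeasure N A" .
qed simp

lemma distr_eq_pmf_of_setI:
  assumes M: "prob_space M" and X: "X \<in> measurable M (count_space UNIV)"
    and A: "finite A" "A \<noteq> {}" and range: "\<And>\<omega>. \<omega> \<in> space M \<Longrightarrow> X \<omega> \<in> A"
    and eq: "\<And>a b. a \<in> A \<Longrightarrow> b \<in> A \<Longrightarrow> emeasure M (X -` {a} \<inter> space M) = emeasure M (X -` {b} \<inter> space M)"
  shows "distr M (count_space UNIV) X = measure_pmf (pmf_of_set A)"
proof (rule measure_eqI)
  interpret P: prob_space M by fact
  obtain a where a: "a \<in> A" using A by blast
  define p where "p = emeasure M (X -` {a} \<inter> space M)"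
  have fiber: "emeasure M (X -` {w} \<inter> space M) = p" if "w \<in> A" for w
    using eq[OF that a] by (simp add: p_def)
  have card_mult: "emeasure M (X -` B \<inter> space M) = of_nat (card (B \<inter> A)) * p" for B
  proof -
    have "X -` B \<inter> space M = (\<Union>w\<in>B \<inter> A. X -` {w} \<inter> space M)"
      using range by auto
    also have "emeasure M \<dots> = (\<Sum>w\<in>B \<inter> A. emeasure M (X -` {w} \<inter> space M))"
      by (rule sum_emeasure[symmetric]) (use A X in \<open>auto simp: disjoint_family_on_def\<close>)
    also have "\<dots> = of_nat (card (B \<inter> A)) * p"
      by (simp add: fiber)
    finally show ?thesis .
  qed
  have "of_nat (card A) * p = 1"
    using card_mult[of UNIV] P.emeasure_space_1 by simp
  moreover have "(of_nat (card A) :: ennreal) \<noteq> 0" using A by simp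
  ultimately have p: "p = 1 / of_nat (card A)"
    by (metis ennreal_mult_divide_eq ennreal_of_nat_neq_top mult.commute)
  fix B assume "B \<in> sets (distr M (count_space UNIV) X)"
  have "emeasure (distr M (count_space UNIV) X) B = of_nat (card (B \<inter> A)) / of_nat (card A)"
    using X by (simp add: emeasure_distr card_mult p ennreal_times_divide)
  also have "\<dots> = emeasure (measure_pmf (pmf_of_set A)) B"
    using A by (simp add: emeasure_pmf_of_set Int_commute ennreal_of_nat_eq_real_of_nat divide_ennreal
        card_gt_0_iff)
  finally show "emeasure (distr M (count_space UNIV) X) B = emeasure (measure_pmf (pmf_of_set A)) B" .
qed simp

lemma sum_mod_eq_mult_sum:
  fixes g :: "nat \<Rightarrow> 'a :: comm_semiring_1"
  shows "(\<Sum>r\<in>{0..<b*m}. g (r mod b)) = of_nat m * (\<Sum>r\<in>{0..<b}. g r)"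
proof (induction m)
  case (Suc m)
  have "{0..<b * Suc m} = {0..<b*m} \<union> {b*m..<b*m+b}" by (auto simp: algebra_simps)
  then have "(\<Sum>r\<in>{0..<b*Suc m}. g (r mod b))
      = (\<Sum>r\<in>{0..<b*m}. g (r mod b)) + (\<Sum>r\<in>{b*m..<b*m+b}. g (r mod b))"
    by (simp add: sum.union_disjoint)
  also have "(\<Sum>r\<in>{b*m..<b*m+b}. g (r mod b)) = (\<Sum>r\<in>{0..<b}. g ((r + b*m) mod b))"
    using sum.shift_bounds_nat_ivl[of "\<lambda>r. g (r mod b)" 0 "b*m" b] by (simp add: add.commute)
  also have "\<dots> = (\<Sum>r\<in>{0..<b}. g r)" by (intro sum.cong) auto
  finally show ?case using Suc by (simp add: algebra_simps)
qed simp

lemma card_mod_filter: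
  assumes "b dvd N"
  shows "card {r\<in>{0..<N}. P (r mod b)} = (N div b) * card {r\<in>{0..<b}. P r}"
proof -
  obtain m where N: "N = b * m" using assms by blast
  have "card {r\<in>{0..<N}. P (r mod b)} = (\<Sum>r\<in>{0..<b * m}. of_bool (P (r mod b)))"
    by (simp add: N Int_def)
  also have "\<dots> = m * (\<Sum>r\<in>{0..<b}. of_bool (P r))"
    using sum_mod_eq_mult_sum[of "\<lambda>r. of_bool (P r) :: nat" b m] by simp
  also have "\<dots> = m * card {r\<in>{0..<b}. P r}"
    by (simp add: Int_def)
  finally show ?thesis
    by (cases "b = 0") (simp_all add: N)
qed

lemma card_filter_bij_betw:
  assumes "bij_betw f A B"
  shows "card {a\<in>A. P (f a)} = card {b\<in>B. P b}"
proof -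
  have "bij_betw f {a\<in>A. P (f a)} {b\<in>B. P b}"
    using assms by (auto simp: bij_betw_def inj_on_def)
  then show ?thesis by (rule bij_betw_same_card)
qed

lemma sum_of_bool_mult: "finite A \<Longrightarrow> (\<Sum>x\<in>A. of_bool (P x) * c) = of_nat (card {x\<in>A. P x}) * c"
  by (simp add: Int_def)

text \<open>The sample space consists of a seed \<open>r # w\<^sub>0\<close> (a list, since the type of the probability space
  is fixed by the theorem) and the gaps \<open>G\<close>. If the word of arrivals in \<open>(0, n k]\<close> is admissible,
  the seed \<open>r\<close> picks one of its markings of \<open>k\<close> occurrences of each letter, and the coupled word is
  the marked subword; otherwise it is the uniform fallback \<open>w\<^sub>0\<close>. The bound \<open>n k\<close> on the letter
  counts only serves to make the set of admissible words finite.\<close>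

locale coupling =
  fixes n k :: nat and lam :: real
  assumes lam: "0 < lam"
begin

abbreviation horizon :: real where "horizon \<equiv> real (n * k)"

definition admissible_words :: "nat list set" where
  "admissible_words =
     {u. set u \<subseteq> {1..n} \<and> (\<forall>i\<in>{1..n}. k \<le> count (mset u) i \<and> count (mset u) i \<le> n * k)}"

definition letter_counts :: "nat list \<Rightarrow> nat \<Rightarrow> nat" where
  "letter_counts u = (\<lambda>i. if i \<in> {1..n} then count (mset u) i else 0)"

definition admissible_counts :: "(nat \<Rightarrow> nat) set" where
  "admissible_counts = letter_counts ` admissible_words"

definition num_markings :: "(nat \<Rightarrow> nat) \<Rightarrow> nat" where
  "num_markings c = card (markings n k c)"

definition marking_enum :: "(nat \<Rightarrow> nat) \<Rightarrow> nat \<Rightarrow> nat \<Rightarrow> bool list" where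
  "marking_enum c = (SOME f. bij_betw f {0..<num_markings c} (markings n k c))"

text \<open>A common multiple of all \<^const>\<open>num_markings\<close>, so that \<open>r mod num_markings c\<close> is uniform
  for uniform \<open>r < marking_period\<close>.\<close>

definition marking_period :: nat where
  "marking_period = (\<Prod>c\<in>admissible_counts. num_markings c)"

definition seeds :: "nat list set" where
  "seeds = (\<lambda>(r,w\<^sub>0). r # w\<^sub>0) ` ({0..<marking_period} \<times> multiset_perms n k)"

definition observed_word :: "(nat \<times> nat \<Rightarrow> real) \<Rightarrow> nat list option" where
  "observed_word G = (if \<exists>u\<in>admissible_words. arrival_word n u horizon G
     then Some (THE u. u \<in> admissible_words \<and> arrival_word n u horizon G) else None)"

definition seed_marking :: "nat list \<Rightarrow> nat list \<Rightarrow> nat \<Rightarrow> bool list" where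
  "seed_marking l u = marking_enum (letter_counts u) (hd l mod num_markings (letter_counts u))"

definition fallback_word :: "nat list \<Rightarrow> nat list" where
  "fallback_word l = (if tl l \<in> multiset_perms n k then tl l else block_word k n)"

definition select_word :: "nat list \<Rightarrow> nat list option \<Rightarrow> nat list" where
  "select_word l v = (case v of Some u \<Rightarrow> select_marked u (seed_marking l u) | None \<Rightarrow> fallback_word l)"

definition coupled_word :: "nat list \<times> (nat \<times> nat \<Rightarrow> real) \<Rightarrow> nat list" where
  "coupled_word \<omega> = select_word (fst \<omega>) (observed_word (snd \<omega>))"

definition coupling_space :: "(nat list \<times> (nat \<times> nat \<Rightarrow> real)) measure" where
  "coupling_space = measure_pmf (pmf_of_set seeds) \<Otimes>\<^sub>M iid_exp lam"

lemma finite_admissible_words: "finite admissible_words"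
proof -
  have "length u \<le> n * (n * k)" if "u \<in> admissible_words" for u
  proof -
    have "length u = (\<Sum>i\<in>{1..n}. count_list u i)"
      using that by (simp add: sum_count_set admissible_words_def)
    also have "\<dots> \<le> (\<Sum>i\<in>{1..n}. n * k)"
      using that by (intro sum_mono) (simp add: admissible_words_def count_mset[symmetric])
    finally show ?thesis by simp
  qed
  then have "admissible_words \<subseteq> {xs. set xs \<subseteq> {1..n} \<and> length xs \<le> n * (n * k)}"
    by (auto simp: admissible_words_def)
  then show ?thesis
    by (rule finite_subset) (rule finite_lists_length_le, simp)
qed

lemma finite_admissible_counts: "finite admissible_counts"
  unfolding admissible_counts_def using finite_admissible_words by simp

lemma admissible_in_words_with_counts:
  "u \<in> admissible_words \<Longrightarrow> u \<in> words_with_counts n (letter_counts u)"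
  by (simp add: admissible_words_def words_with_counts_def letter_counts_def)

lemma letter_counts_in_admissible_counts: "u \<in> admissible_words \<Longrightarrow> letter_counts u \<in> admissible_counts"
  by (simp add: admissible_counts_def)

lemma admissible_counts_bounds:
  assumes "c \<in> admissible_counts"
  shows "\<forall>i\<in>{1..n}. k \<le> c i \<and> c i \<le> n * k" "\<forall>i. i \<notin> {1..n} \<longrightarrow> c i = 0"
  using assms by (auto simp: admissible_counts_def admissible_words_def letter_counts_def)

lemma words_with_counts_admissible:
  assumes c: "c \<in> admissible_counts" and u: "u \<in> words_with_counts n c"
  shows "u \<in> admissible_words" "letter_counts u = c"
proof -
  have u1: "set u \<subseteq> {1..n}" and u2: "\<forall>i\<in>{1..n}. count (mset u) i = c i"
    using u unfolding words_with_counts_def by blast+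
  show "u \<in> admissible_words"
    unfolding admissible_words_def using u1 u2 admissible_counts_bounds(1)[OF c] by simp
  show "letter_counts u = c"
  proof
    fix i show "letter_counts u i = c i"
      using u2 admissible_counts_bounds(2)[OF c] by (cases "i \<in> {1..n}") (auto simp: letter_counts_def)
  qed
qed

lemma admissible_words_eq_UN: "admissible_words = (\<Union>c\<in>admissible_counts. words_with_counts n c)"
proof
  show "admissible_words \<subseteq> (\<Union>c\<in>admissible_counts. words_with_counts n c)"
    using admissible_in_words_with_counts letter_counts_in_admissible_counts by blast
  show "(\<Union>c\<in>admissible_counts. words_with_counts n c) \<subseteq> admissible_words"
    using words_with_counts_admissible(1) by blast
qed

lemma num_markings_pos: "c \<in> admissible_counts \<Longrightarrow> 0 < num_markings c"
  using markings_nonempty[of n k c] finite_markings[of n k c] admissible_counts_bounds(1)[of c]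
  by (simp add: num_markings_def card_gt_0_iff)

lemma bij_betw_marking_enum: "bij_betw (marking_enum c) {0..<num_markings c} (markings n k c)"
  unfolding marking_enum_def num_markings_def
  by (rule someI_ex[OF ex_bij_betw_nat_finite[OF finite_markings]])

lemma seed_marking_in_markings:
  assumes "u \<in> admissible_words"
  shows "seed_marking l u \<in> markings n k (letter_counts u)"
proof -
  have "hd l mod num_markings (letter_counts u) \<in> {0..<num_markings (letter_counts u)}"
    using num_markings_pos[OF letter_counts_in_admissible_counts[OF assms]] by simp
  then show ?thesis
    using bij_betw_marking_enum unfolding seed_marking_def bij_betw_def by blast
qed

lemma marking_period_pos: "0 < marking_period"
  unfolding marking_period_def using num_markings_pos finite_admissible_counts by (simp add: prod_pos)

lemma num_markings_dvd: "c \<in> admissible_counts \<Longrightarrow> num_markings c dvd marking_period"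
  unfolding marking_period_def by (rule dvd_prodI[OF finite_admissible_counts])

lemma inj_on_Cons_pair: "inj_on (\<lambda>(r,w\<^sub>0). r # w\<^sub>0) X"
  by (auto simp: inj_on_def)

lemma finite_seeds: "finite seeds"
  unfolding seeds_def using finite_multiset_perms by simp

lemma seeds_nonempty: "seeds \<noteq> {}"
  unfolding seeds_def using marking_period_pos multiset_perms_nonempty by auto

lemma observed_word_eq_Some:
  "observed_word G = Some u \<longleftrightarrow> u \<in> admissible_words \<and> arrival_word n u horizon G"
proof -
  have the: "(THE u. u \<in> admissible_words \<and> arrival_word n u horizon G) = v"
    if "v \<in> admissible_words \<and> arrival_word n v horizon G" for v
    using that by (intro the_equality) (auto dest: arrival_word_unique)
  show ?thesis
  proof
    assume "observed_word G = Some u"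
    then obtain v where "v \<in> admissible_words \<and> arrival_word n v horizon G" "u = v"
      using the unfolding observed_word_def by (metis option.distinct(1) option.inject)
    then show "u \<in> admissible_words \<and> arrival_word n u horizon G" by simp
  next
    assume "u \<in> admissible_words \<and> arrival_word n u horizon G"
    then show "observed_word G = Some u" using the[of u] unfolding observed_word_def by auto
  qed
qed

lemma observed_word_eq_None:
  "observed_word G = None \<longleftrightarrow> (\<forall>u\<in>admissible_words. \<not> arrival_word n u horizon G)"
  by (auto simp: observed_word_def)

lemma coupled_word_in_multiset_perms: "coupled_word \<omega> \<in> multiset_perms n k"
proof (cases "observed_word (snd \<omega>)")
  case None
  then show ?thesis using block_word_in_multiset_perms by (simp add: coupled_word_def select_word_def fallback_word_def)
next
  case (Some u)
  then have "u \<in> admissible_words" by (simp add: observed_word_eq_Some)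
  then show ?thesis
    using Some select_marked_in_multiset_perms[OF admissible_in_words_with_counts seed_marking_in_markings]
    by (simp add: coupled_word_def select_word_def)
qed

lemma prob_space_coupling_space: "prob_space coupling_space"
proof -
  interpret Q: prob_space "iid_exp lam" by (rule prob_space_iid_exp[OF lam])
  interpret pair_prob_space "measure_pmf (pmf_of_set seeds)" "iid_exp lam" by unfold_locales
  show ?thesis unfolding coupling_space_def by unfold_locales
qed

lemma space_coupling_space [simp]: "space coupling_space = UNIV"
  by (simp add: coupling_space_def space_pair_measure)

lemma measurable_snd_coupling_space: "snd \<in> measurable coupling_space (iid_exp lam)"
  unfolding coupling_space_def by (rule measurable_snd)

lemma distr_snd_coupling_space: "distr coupling_space (iid_exp lam) snd = iid_exp lam"
  unfolding coupling_space_def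
  using prob_space_iid_exp[OF lam]
  by (intro distr_snd_pair_prob_space prob_space_measure_pmf prob_space_imp_sigma_finite)

lemma measurable_observed_word: "observed_word \<in> measurable (iid_exp lam) (count_space UNIV)"
proof (subst measurable_count_space_eq2_countable, intro conjI ballI)
  fix v :: "nat list option"
  show "observed_word -` {v} \<inter> space (iid_exp lam) \<in> sets (iid_exp lam)"
  proof (cases v)
    case None
    then have "observed_word -` {v} \<inter> space (iid_exp lam)
        = space (iid_exp lam) - (\<Union>u\<in>admissible_words. {G. arrival_word n u horizon G})"
      by (auto simp: observed_word_eq_None)
    moreover have "(\<Union>u\<in>admissible_words. {G. arrival_word n u horizon G}) \<in> sets (iid_exp lam)"
      using finite_admissible_words by (intro sets.finite_UN sets_arrival_word) auto
    ultimately show ?thesis by (metis sets.compl_sets)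
  next
    case (Some u)
    then have "observed_word -` {v} \<inter> space (iid_exp lam)
        = (if u \<in> admissible_words then {G. arrival_word n u horizon G} else {})"
      by (auto simp: observed_word_eq_Some)
    then show ?thesis using sets_arrival_word by auto
  qed
qed simp

lemma measurable_coupled_word: "coupled_word \<in> measurable coupling_space (count_space UNIV)"
proof -
  have pair: "(\<lambda>\<omega>. (fst \<omega>, observed_word (snd \<omega>))) \<in> measurable coupling_space (count_space UNIV \<Otimes>\<^sub>M count_space UNIV)"
  proof (intro measurable_Pair)
    show "fst \<in> measurable coupling_space (count_space UNIV)"
      unfolding coupling_space_def by (rule measurable_compose[OF measurable_fst]) (simp add: measurable_cong_sets)
    show "(\<lambda>\<omega>. observed_word (snd \<omega>)) \<in> measurable coupling_space (count_space UNIV)"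
      by (rule measurable_compose[OF measurable_snd_coupling_space measurable_observed_word])
  qed
  have countable: "count_space UNIV \<Otimes>\<^sub>M count_space UNIV = count_space (UNIV :: (nat list \<times> nat list option) set)"
    using pair_measure_countable[of "UNIV :: nat list set" "UNIV :: nat list option set"] by simp
  have "(\<lambda>(l,v). select_word l v) \<in> measurable (count_space UNIV) (count_space UNIV)" by simp
  from measurable_compose[OF pair[unfolded countable] this]
  have "(\<lambda>\<omega>. (\<lambda>(l,v). select_word l v) (fst \<omega>, observed_word (snd \<omega>))) \<in> measurable coupling_space (count_space UNIV)" .
  then show ?thesis by (simp add: coupled_word_def[abs_def])
qed

definition no_observed_word :: "(nat \<times> nat \<Rightarrow> real) set" where
  "no_observed_word = {G. observed_word G = None}"

lemma sets_no_observed_word: "no_observed_word \<in> sets (iid_exp lam)"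
proof -
  have "no_observed_word = observed_word -` {None} \<inter> space (iid_exp lam)"
    by (auto simp: no_observed_word_def)
  then show ?thesis
    using measurable_observed_word by (simp add: measurable_count_space_eq2_countable)
qed

lemma indicator_select_word:
  "(indicator {G. select_word l (observed_word G) = w} G :: ennreal) =
     (\<Sum>u\<in>admissible_words. of_bool (select_marked u (seed_marking l u) = w) * indicator {G. arrival_word n u horizon G} G)
     + of_bool (fallback_word l = w) * indicator no_observed_word G"
proof (cases "observed_word G")
  case None
  then have "\<forall>u\<in>admissible_words. \<not> arrival_word n u horizon G" by (simp add: observed_word_eq_None)
  then show ?thesis
    using None by (simp add: select_word_def no_observed_word_def indicator_def)
next
  case (Some u\<^sub>0)
  then have u\<^sub>0: "u\<^sub>0 \<in> admissible_words" "arrival_word n u\<^sub>0 horizon G"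
    by (auto simp: observed_word_eq_Some)
  have "arrival_word n u horizon G \<longleftrightarrow> u = u\<^sub>0" for u
    using u\<^sub>0 arrival_word_unique by blast
  then have "(\<Sum>u\<in>admissible_words. of_bool (select_marked u (seed_marking l u) = w)
                 * indicator {G. arrival_word n u horizon G} G :: ennreal)
      = of_bool (select_marked u\<^sub>0 (seed_marking l u\<^sub>0) = w)"
    using u\<^sub>0 finite_admissible_words by (simp add: indicator_def if_distrib sum.delta cong: if_cong)
  then show ?thesis using Some by (simp add: select_word_def no_observed_word_def)
qed

lemma emeasure_select_word:
  "emeasure (iid_exp lam) {G. select_word l (observed_word G) = w} =
     (\<Sum>u\<in>admissible_words. of_bool (select_marked u (seed_marking l u) = w)
         * emeasure (iid_exp lam) {G. arrival_word n u horizon G})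
     + of_bool (fallback_word l = w) * emeasure (iid_exp lam) no_observed_word"
proof -
  have "(\<lambda>G. select_word l (observed_word G)) \<in> measurable (iid_exp lam) (count_space UNIV)"
    using measurable_compose[OF measurable_observed_word, of "select_word l"] by simp
  from measurable_sets[OF this, of "{w}"]
  have "{G. select_word l (observed_word G) = w} \<in> sets (iid_exp lam)"
    by (simp add: vimage_def)
  then have "emeasure (iid_exp lam) {G. select_word l (observed_word G) = w}
      = (\<integral>\<^sup>+G. indicator {G. select_word l (observed_word G) = w} G \<partial>iid_exp lam)"
    by (rule nn_integral_indicator[symmetric])
  also have "\<dots> = (\<Sum>u\<in>admissible_words. (\<integral>\<^sup>+G. of_bool (select_marked u (seed_marking l u) = w)
                       * indicator {G. arrival_word n u horizon G} G \<partial>iid_exp lam))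
        + (\<integral>\<^sup>+G. of_bool (fallback_word l = w) * indicator no_observed_word G \<partial>iid_exp lam)"
    unfolding indicator_select_word using sets_arrival_word sets_no_observed_word
    by (subst nn_integral_add) (auto simp: nn_integral_sum)
  also have "\<dots> = (\<Sum>u\<in>admissible_words. of_bool (select_marked u (seed_marking l u) = w)
                       * emeasure (iid_exp lam) {G. arrival_word n u horizon G})
        + of_bool (fallback_word l = w) * emeasure (iid_exp lam) no_observed_word"
    using sets_arrival_word sets_no_observed_word by (simp add: nn_integral_cmult_indicator)
  finally show ?thesis .
qed

lemma card_seeds_hd:
  "card {l\<in>seeds. P (hd l)} = card {r\<in>{0..<marking_period}. P r} * card (multiset_perms n k)"
proof -
  have "{l\<in>seeds. P (hd l)} = (\<lambda>(r,w\<^sub>0). r # w\<^sub>0) ` ({r\<in>{0..<marking_period}. P r} \<times> multiset_perms n k)"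
    by (auto simp: seeds_def)
  then show ?thesis by (simp add: card_image[OF inj_on_Cons_pair] card_cartesian_product)
qed

lemma card_seeds_fallback:
  assumes "w \<in> multiset_perms n k"
  shows "card {l\<in>seeds. fallback_word l = w} = marking_period"
proof -
  have "{l\<in>seeds. fallback_word l = w} = (\<lambda>r. r # w) ` {0..<marking_period}"
    using assms by (auto simp: seeds_def fallback_word_def)
  then show ?thesis by (simp add: card_image inj_on_def)
qed

lemma card_seeds_select:
  assumes u: "u \<in> admissible_words"
  shows "card {l\<in>seeds. select_marked u (seed_marking l u) = w}
       = card (multiset_perms n k) * (marking_period div num_markings (letter_counts u))
         * card {\<beta>\<in>markings n k (letter_counts u). select_marked u \<beta> = w}"
proof -
  let ?c = "letter_counts u"
  have c: "?c \<in> admissible_counts" using letter_counts_in_admissible_counts[OF u] .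
  have "card {l\<in>seeds. select_marked u (seed_marking l u) = w}
      = card {r\<in>{0..<marking_period}. select_marked u (marking_enum ?c (r mod num_markings ?c)) = w}
        * card (multiset_perms n k)"
    unfolding seed_marking_def by (rule card_seeds_hd)
  also have "card {r\<in>{0..<marking_period}. select_marked u (marking_enum ?c (r mod num_markings ?c)) = w}
      = (marking_period div num_markings ?c) * card {r\<in>{0..<num_markings ?c}. select_marked u (marking_enum ?c r) = w}"
    by (rule card_mod_filter[OF num_markings_dvd[OF c]])
  also have "card {r\<in>{0..<num_markings ?c}. select_marked u (marking_enum ?c r) = w}
      = card {\<beta>\<in>markings n k ?c. select_marked u \<beta> = w}"
    by (rule card_filter_bij_betw[OF bij_betw_marking_enum])
  finally show ?thesis by (simp add: ac_simps)
qed

definition count_prob :: "(nat \<Rightarrow> nat) \<Rightarrow> ennreal" where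
  "count_prob c = ennreal (word_prob n lam (\<Sum>i\<in>{1..n}. c i) horizon)"

lemma emeasure_arrival_word_count_prob:
  "u \<in> words_with_counts n c \<Longrightarrow> emeasure (iid_exp lam) {G. arrival_word n u horizon G} = count_prob c"
  unfolding count_prob_def using length_words_with_counts[of u n c]
  by (subst emeasure_arrival_word[OF lam]) (auto simp: words_with_counts_def)

lemma sum_admissible_words:
  "(\<Sum>u\<in>admissible_words. f u) = (\<Sum>c\<in>admissible_counts. \<Sum>u\<in>words_with_counts n c. f u)"
  unfolding admissible_words_eq_UN
  using finite_admissible_counts finite_words_with_counts words_with_counts_admissible(2)
  by (subst sum.UNION_disjoint) blast+

lemma card_selection_fiber:
  "card (selection_fiber n k c w) = (\<Sum>u\<in>words_with_counts n c. card {\<beta>\<in>markings n k c. select_marked u \<beta> = w})"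
proof -
  have "selection_fiber n k c w = Sigma (words_with_counts n c) (\<lambda>u. {\<beta>\<in>markings n k c. select_marked u \<beta> = w})"
    by (auto simp: selection_fiber_def)
  then show ?thesis
    by (simp add: card_SigmaI finite_words_with_counts finite_markings)
qed

text \<open>This sum depends on \<open>w\<close> only through the sizes of the selection fibres.\<close>

lemma sum_seeds_emeasure_select_word:
  assumes w: "w \<in> multiset_perms n k"
  shows "(\<Sum>l\<in>seeds. emeasure (iid_exp lam) {G. select_word l (observed_word G) = w})
       = (\<Sum>c\<in>admissible_counts. count_prob c
            * of_nat (card (multiset_perms n k) * (marking_period div num_markings c) * card (selection_fiber n k c w)))
         + emeasure (iid_exp lam) no_observed_word * of_nat marking_period"
proof -
  have "(\<Sum>l\<in>seeds. of_bool (select_marked u (seed_marking l u) = w) * emeasure (iid_exp lam) {G. arrival_word n u horizon G})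
      = count_prob c * of_nat (card (multiset_perms n k) * (marking_period div num_markings c))
        * of_nat (card {\<beta>\<in>markings n k c. select_marked u \<beta> = w})"
    if "c \<in> admissible_counts" "u \<in> words_with_counts n c" for c u
  proof -
    have "(\<Sum>l\<in>seeds. of_bool (select_marked u (seed_marking l u) = w) * emeasure (iid_exp lam) {G. arrival_word n u horizon G})
        = of_nat (card {l\<in>seeds. select_marked u (seed_marking l u) = w}) * emeasure (iid_exp lam) {G. arrival_word n u horizon G}"
      by (rule sum_of_bool_mult[OF finite_seeds])
    then show ?thesis
      unfolding emeasure_arrival_word_count_prob[OF that(2)]
      using words_with_counts_admissible[OF that] by (simp add: card_seeds_select ac_simps)
  qed
  then have "(\<Sum>u\<in>admissible_words. \<Sum>l\<in>seeds. of_bool (select_marked u (seed_marking l u) = w)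
                 * emeasure (iid_exp lam) {G. arrival_word n u horizon G})
      = (\<Sum>c\<in>admissible_counts. count_prob c
            * of_nat (card (multiset_perms n k) * (marking_period div num_markings c) * card (selection_fiber n k c w)))"
    by (simp add: sum_admissible_words card_selection_fiber sum_distrib_left mult.assoc)
  moreover have "(\<Sum>l\<in>seeds. of_bool (fallback_word l = w) * emeasure (iid_exp lam) no_observed_word)
      = emeasure (iid_exp lam) no_observed_word * of_nat marking_period"
    by (subst sum_of_bool_mult[OF finite_seeds]) (simp add: card_seeds_fallback[OF w] mult.commute)
  ultimately show ?thesis
    by (simp add: emeasure_select_word sum.distrib sum.swap[of _ seeds admissible_words])
qed

lemma emeasure_coupled_word:
  "emeasure coupling_space {\<omega>. coupled_word \<omega> = w}
     = (\<Sum>l\<in>seeds. emeasure (iid_exp lam) {G. select_word l (observed_word G) = w}) / of_nat (card seeds)"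
proof -
  interpret Q: prob_space "iid_exp lam" by (rule prob_space_iid_exp[OF lam])
  have "{\<omega>. coupled_word \<omega> = w} \<in> sets (measure_pmf (pmf_of_set seeds) \<Otimes>\<^sub>M iid_exp lam)"
    using measurable_sets[OF measurable_coupled_word, of "{w}"]
    by (simp add: coupling_space_def vimage_def space_pair_measure)
  then have "emeasure coupling_space {\<omega>. coupled_word \<omega> = w}
      = (\<integral>\<^sup>+l. emeasure (iid_exp lam) (Pair l -` {\<omega>. coupled_word \<omega> = w}) \<partial>measure_pmf (pmf_of_set seeds))"
    unfolding coupling_space_def by (rule Q.emeasure_pair_measure_alt)
  also have "\<dots> = (\<integral>\<^sup>+l. emeasure (iid_exp lam) {G. select_word l (observed_word G) = w} \<partial>measure_pmf (pmf_of_set seeds))"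
    by (simp add: coupled_word_def vimage_def)
  also have "\<dots> = (\<Sum>l\<in>seeds. emeasure (iid_exp lam) {G. select_word l (observed_word G) = w}) / of_nat (card seeds)"
    by (rule nn_integral_pmf_of_set[OF seeds_nonempty finite_seeds])
  finally show ?thesis .
qed

lemma distr_coupled_word:
  "distr coupling_space (count_space UNIV) coupled_word = measure_pmf (pmf_of_set (multiset_perms n k))"
proof (rule distr_eq_pmf_of_setI[OF prob_space_coupling_space measurable_coupled_word
      finite_multiset_perms multiset_perms_nonempty coupled_word_in_multiset_perms])
  fix w w' assume w: "w \<in> multiset_perms n k" and w': "w' \<in> multiset_perms n k"
  show "emeasure coupling_space (coupled_word -` {w} \<inter> space coupling_space)
      = emeasure coupling_space (coupled_word -` {w'} \<inter> space coupling_space)"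
    using card_selection_fiber_eq[OF w w']
    by (simp add: vimage_def emeasure_coupled_word sum_seeds_emeasure_select_word[OF w]
        sum_seeds_emeasure_select_word[OF w'])
qed

lemma max_chain_len_coupled_word_le:
  assumes pos: "\<forall>ij. 0 < G ij" and u: "set u \<subseteq> {1..n}" and G: "arrival_word n u horizon G"
    and rows: "\<forall>i\<in>{1..n}. k \<le> count (mset u) i"
  shows "max_chain_len (word_points (coupled_word (l, G))) \<le> max_chain_len (ppp_window G horizon n)"
proof -
  let ?P = "arrival_points n u G"
  have window: "ppp_window G horizon n = set ?P"
    by (rule ppp_window_eq_arrival_points[OF pos G])
  have sorted: "sorted_wrt (\<lambda>p q. fst p < fst q) ?P" and labels: "map snd ?P = u"
    using arrival_points_sorted[OF pos G] by auto
  show ?thesis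
  proof (cases "u \<in> admissible_words")
    case True
    then have "observed_word G = Some u" using G by (simp add: observed_word_eq_Some)
    then have "coupled_word (l, G) = masked (map snd ?P) (marks u (seed_marking l u))"
      by (simp add: coupled_word_def select_word_def select_marked_def labels)
    then show ?thesis
      using max_chain_len_masked_word_points[OF sorted] window by simp
  next
    case False
    then obtain i where "n * k < count (mset u) i"
      using u rows by (auto simp: admissible_words_def not_le)
    moreover have "count (mset u) i \<le> max_chain_len (ppp_window G horizon n)"
      using count_le_max_chain_len[OF sorted] window labels by simp
    moreover have "max_chain_len (word_points (coupled_word (l, G))) \<le> n * k"
      using max_chain_len_word_points_le_length[of "coupled_word (l, G)"] coupled_word_in_multiset_perms
      by (simp add: multiset_perms_def mult.commute)
    ultimately show ?thesis by linarith
  qed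
qed

lemma chain_bound:
  assumes pos: "\<forall>ij. 0 < G ij" and G: "\<exists>u. set u \<subseteq> {1..n} \<and> arrival_word n u horizon G"
  shows "real (max_chain_len (word_points (coupled_word (l, G))))
       \<le> real (max_chain_len (ppp_window G horizon n))
         + horizon * (1 - of_bool (\<forall>i\<in>{1..n}. card {p \<in> ppp_window G horizon n. snd p = i} \<ge> k))"
proof (cases "\<forall>i\<in>{1..n}. card {p \<in> ppp_window G horizon n. snd p = i} \<ge> k")
  case True
  obtain u where u: "set u \<subseteq> {1..n}" "arrival_word n u horizon G" using G by blast
  then have "\<forall>i\<in>{1..n}. k \<le> count (mset u) i"
    using True card_ppp_window_row[OF pos] by simp
  then show ?thesis
    using True max_chain_len_coupled_word_le[OF pos u] by simp
next
  case False
  have "max_chain_len (word_points (coupled_word (l, G))) \<le> n * k"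
    using max_chain_len_word_points_le_length[of "coupled_word (l, G)"] coupled_word_in_multiset_perms
    by (simp add: multiset_perms_def mult.commute)
  then have "real (max_chain_len (word_points (coupled_word (l, G)))) \<le> horizon"
    by (simp only: of_nat_le_iff)
  moreover have "(of_bool (\<forall>i\<in>{1..n}. card {p \<in> ppp_window G horizon n. snd p = i} \<ge> k) :: real) = 0"
    using False by simp
  ultimately show ?thesis by (simp only:) simp
qed

lemma AE_chain_bound:
  "AE \<omega> in coupling_space. real (max_chain_len (word_points (coupled_word \<omega>)))
     \<le> real (max_chain_len (ppp_window (snd \<omega>) horizon n))
       + horizon * (1 - of_bool (\<forall>i\<in>{1..n}. card {p \<in> ppp_window (snd \<omega>) horizon n. snd p = i} \<ge> k))"
proof -
  have "AE G in iid_exp lam. \<exists>u. set u \<subseteq> {1..n} \<and> arrival_word n u horizon G"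
    by (rule AE_arrival_word[OF lam]) simp
  with AE_iid_exp_pos[OF lam]
  have "AE G in iid_exp lam. (\<forall>ij. 0 < G ij) \<and> (\<exists>u. set u \<subseteq> {1..n} \<and> arrival_word n u horizon G)"
    by eventually_elim simp
  then have "AE \<omega> in coupling_space. (\<forall>ij. 0 < snd \<omega> ij) \<and> (\<exists>u. set u \<subseteq> {1..n} \<and> arrival_word n u horizon (snd \<omega>))"
    by (intro AE_distrD[OF measurable_snd_coupling_space]) (simp only: distr_snd_coupling_space)
  then show ?thesis
  proof eventually_elim
    case (elim \<omega>)
    then show ?case using chain_bound[where G="snd \<omega>" and l="fst \<omega>"] by simp
  qed
qed

end

theorem mainTheorem10:
  fixes n k :: nat and lam :: real
  assumes "n \<ge> 1" and "k \<ge> 1" and "lam > 0"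
  shows "\<exists>(M :: (nat list \<times> (nat \<times> nat \<Rightarrow> real)) measure)
            (S :: nat list \<times> (nat \<times> nat \<Rightarrow> real) \<Rightarrow> nat list)
            (G :: nat list \<times> (nat \<times> nat \<Rightarrow> real) \<Rightarrow> nat \<times> nat \<Rightarrow> real).
           prob_space M
         \<and> S \<in> measurable M (count_space UNIV)
         \<and> distr M (count_space UNIV) S = measure_pmf (pmf_of_set (multiset_perms n k))
         \<and> (\<forall>ij. distributed M lborel (\<lambda>\<omega>. G \<omega> ij) (exponential_density lam))
         \<and> prob_space.indep_vars M (\<lambda>_. borel) (\<lambda>ij \<omega>. G \<omega> ij) UNIV
         \<and> (AE \<omega> in M.
              real (max_chain_len (word_points (S \<omega>)))
                \<le> real (max_chain_len (ppp_window (G \<omega>) (real (n * k)) n))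
                  + real (n * k) * (1 - of_bool (\<forall>i\<in>{1..n}.
                      card {p \<in> ppp_window (G \<omega>) (real (n * k)) n. snd p = i} \<ge> k)))"
proof -
  interpret coupling n k lam using \<open>lam > 0\<close> by unfold_locales
  note gaps = measurable_snd_coupling_space distr_snd_coupling_space
  show ?thesis
  proof (intro exI conjI allI)
    show "prob_space coupling_space" by (rule prob_space_coupling_space)
    show "coupled_word \<in> measurable coupling_space (count_space UNIV)" by (rule measurable_coupled_word)
    show "distr coupling_space (count_space UNIV) coupled_word = measure_pmf (pmf_of_set (multiset_perms n k))"
      by (rule distr_coupled_word)
    show "distributed coupling_space lborel (\<lambda>\<omega>. snd \<omega> ij) (exponential_density lam)" for ij
      by (rule distributed_iid_exp_component[OF lam gaps])
    show "prob_space.indep_vars coupling_space (\<lambda>_. borel) (\<lambda>ij \<omega>. snd \<omega> ij) UNIV"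
      by (rule indep_vars_iid_exp_components[OF lam prob_space_coupling_space gaps])
  qed (rule AE_chain_bound)
qed

end
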